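(* Assume (A1) and (A4). Let $\alpha>0$, $x,v\in\mathbb{R}^n$, and a $b$-tuple $\mathcal S=(\kappa(1),\dots,\kappa(b))$ of elements of $[N]$ be given. For $\xi=(\xi_1,\dots,\xi_b)\in\mathbb{R}^{m_{\mathcal S}}$ define $z(\xi)=x-\alpha\mathcal A_{\mathcal S}^\top\xi+v$ and $$\mathcal U(\xi)=\sum_{j=1}^b\hat f^\ast_{\kappa(j)}(\xi_j)+\frac{b}{2\alpha}\|z(\xi)\|^2-\frac{b}{\alpha}\operatorname{env}_{\alpha\phi}(z(\xi)).$$ Then $\mathcal U$ is $\mu_\ast$-strongly convex on $\mathcal E:=\prod_{j=1}^b\operatorname{dom}(\hat f^\ast_{\kappa(j)})$, and $\nabla\mathcal U(\xi)=\mathcal V(\xi)$ for all $\xi\in\mathcal D$.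
   Context: Setting: $f(x)=\frac1N\sum_{i=1}^N f_i(A_ix)$, $A_i\in\mathbb{R}^{m_i\times n}$, $f_i:\mathbb{R}^{m_i}\to\mathbb{R}$ continuously differentiable; $\phi:\mathbb{R}^n\to(-\infty,\infty]$ proper closed convex. (A1): each $f_i$ is $L_i$-smooth and $\gamma_i$-weakly convex. (A4): each $\hat f_i^\ast$ is essentially differentiable with locally Lipschitz gradient on $\mathcal D_i:=\operatorname{int}(\operatorname{dom}\hat f_i^\ast)\ne\emptyset$, where $\hat f_i(z)=f_i(z)+\frac{\gamma_i}{2}\|z\|^2$ and $\hat f_i^\ast$ is its convex conjugate. $\mu_\ast:=\min_{i\in[N]}1/(L_i+\gamma_i)$. $\operatorname{prox}_g(y)=\operatorname{argmin}_z g(z)+\frac12\|y-z\|^2$ and $\operatorname{env}_g(y)=\min_z g(z)+\frac12\|y-z\|^2$. For the tuple: $m_{\mathcal S}=\sum_j m_{\kappa(j)}$, $\mathcal D=\prod_j\mathcal D_{\kappa(j)}$, $\mathcal A_{\mathcal S}=\frac1b(A_{\kappa(1)}^\top,\dots,A_{\kappa(b)}^\top)^\top$, and $\mathcal V=(\mathcal V_1,\dots,\mathcal V_b)$ with $\mathcal V_j(\xi)=\nabla\hat f^\ast_{\kappa(j)}(\xi_j)-A_{\kappa(j)}\operatorname{prox}_{\alpha\phi}(x-\alpha\mathcal A_{\mathcal S}^\top\xi+v)$. *)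

theory Defs
  imports "HOL-Analysis.Analysis"
begin

text \<open>Euclidean spaces of varying dimension are represented concretely:
  a vector indexed by a finite index set I is a function 'a => real vanishing
  outside I.  R^k is the case I = {..<k}; the stacked space R^{m_S} is the
  case I = {(j,r). j < b, r < m (kappa j)} (block j is r |-> xi (j,r)).\<close>

definition vecs :: "'a set \<Rightarrow> ('a \<Rightarrow> real) set" where
  "vecs I = {v. \<forall>a. a \<notin> I \<longrightarrow> v a = 0}"

definition ip :: "'a set \<Rightarrow> ('a \<Rightarrow> real) \<Rightarrow> ('a \<Rightarrow> real) \<Rightarrow> real" where
  "ip I u w = (\<Sum>a\<in>I. u a * w a)"

definition nrm :: "'a set \<Rightarrow> ('a \<Rightarrow> real) \<Rightarrow> real" where
  "nrm I u = L2_set u I"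

definition vsub :: "('a \<Rightarrow> real) \<Rightarrow> ('a \<Rightarrow> real) \<Rightarrow> ('a \<Rightarrow> real)" where
  "vsub u w = (\<lambda>a. u a - w a)"

definition has_grad :: "'a set \<Rightarrow> (('a \<Rightarrow> real) \<Rightarrow> real) \<Rightarrow> ('a \<Rightarrow> real) \<Rightarrow> ('a \<Rightarrow> real) \<Rightarrow> bool" where
  "has_grad I f g y \<longleftrightarrow> g \<in> vecs I \<and>
     (\<forall>e>0. \<exists>d>0. \<forall>z\<in>vecs I. nrm I (vsub z y) < d \<longrightarrow>
        \<bar>f z - f y - ip I g (vsub z y)\<bar> \<le> e * nrm I (vsub z y))"

definition grad :: "'a set \<Rightarrow> (('a \<Rightarrow> real) \<Rightarrow> real) \<Rightarrow> ('a \<Rightarrow> real) \<Rightarrow> ('a \<Rightarrow> real)" where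
  "grad I f y = (SOME g. has_grad I f g y)"

definition convex_fn :: "('a \<Rightarrow> real) set \<Rightarrow> (('a \<Rightarrow> real) \<Rightarrow> ereal) \<Rightarrow> bool" where
  "convex_fn E h \<longleftrightarrow> (\<forall>x\<in>E. \<forall>y\<in>E. \<forall>t::real. 0 \<le> t \<and> t \<le> 1 \<longrightarrow>
      h (\<lambda>a. t * x a + (1 - t) * y a) \<le> ereal t * h x + ereal (1 - t) * h y)"

definition strongly_convex_on :: "'a set \<Rightarrow> ('a \<Rightarrow> real) set \<Rightarrow> real \<Rightarrow> (('a \<Rightarrow> real) \<Rightarrow> real) \<Rightarrow> bool" where
  "strongly_convex_on I E \<mu> h \<longleftrightarrow> convex_fn E (\<lambda>\<xi>. ereal (h \<xi> - \<mu> / 2 * (nrm I \<xi>)\<^sup>2))"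

definition lsmooth :: "'a set \<Rightarrow> real \<Rightarrow> (('a \<Rightarrow> real) \<Rightarrow> real) \<Rightarrow> bool" where
  "lsmooth I L f \<longleftrightarrow> (\<forall>y\<in>vecs I. \<exists>g. has_grad I f g y) \<and>
     (\<forall>y\<in>vecs I. \<forall>z\<in>vecs I. nrm I (vsub (grad I f y) (grad I f z)) \<le> L * nrm I (vsub y z))"

definition fhat :: "'a set \<Rightarrow> real \<Rightarrow> (('a \<Rightarrow> real) \<Rightarrow> real) \<Rightarrow> ('a \<Rightarrow> real) \<Rightarrow> real" where
  "fhat I \<gamma> f = (\<lambda>z. f z + \<gamma> / 2 * (nrm I z)\<^sup>2)"

definition weakly_convex :: "'a set \<Rightarrow> real \<Rightarrow> (('a \<Rightarrow> real) \<Rightarrow> real) \<Rightarrow> bool" where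
  "weakly_convex I \<gamma> f \<longleftrightarrow> \<gamma> \<ge> 0 \<and> convex_fn (vecs I) (\<lambda>z. ereal (fhat I \<gamma> f z))"

definition conj :: "'a set \<Rightarrow> (('a \<Rightarrow> real) \<Rightarrow> real) \<Rightarrow> ('a \<Rightarrow> real) \<Rightarrow> ereal" where
  "conj I h y = (SUP z\<in>vecs I. ereal (ip I y z - h z))"

definition edom :: "'a set \<Rightarrow> (('a \<Rightarrow> real) \<Rightarrow> ereal) \<Rightarrow> ('a \<Rightarrow> real) set" where
  "edom I h = {y \<in> vecs I. h y < \<infinity>}"

definition rint :: "'a set \<Rightarrow> ('a \<Rightarrow> real) set \<Rightarrow> ('a \<Rightarrow> real) set" where
  "rint I S = {y \<in> S. \<exists>r>0. \<forall>z\<in>vecs I. nrm I (vsub z y) < r \<longrightarrow> z \<in> S}"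

definition egrad :: "'a set \<Rightarrow> (('a \<Rightarrow> real) \<Rightarrow> ereal) \<Rightarrow> ('a \<Rightarrow> real) \<Rightarrow> ('a \<Rightarrow> real)" where
  "egrad I h y = grad I (\<lambda>z. real_of_ereal (h z)) y"

definition ess_diff :: "'a set \<Rightarrow> (('a \<Rightarrow> real) \<Rightarrow> ereal) \<Rightarrow> bool" where
  "ess_diff I h \<longleftrightarrow> rint I (edom I h) \<noteq> {} \<and>
     (\<forall>y\<in>rint I (edom I h). \<exists>g. has_grad I (\<lambda>z. real_of_ereal (h z)) g y) \<and>
     (\<forall>u y0. (\<forall>k. u k \<in> rint I (edom I h)) \<and> y0 \<in> vecs I \<and> y0 \<notin> rint I (edom I h) \<and>
        (\<lambda>k. nrm I (vsub (u k) y0)) \<longlonglongrightarrow> 0 \<longrightarrow>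
        filterlim (\<lambda>k. nrm I (egrad I h (u k))) at_top sequentially)"

definition loc_lip_grad :: "'a set \<Rightarrow> (('a \<Rightarrow> real) \<Rightarrow> ereal) \<Rightarrow> ('a \<Rightarrow> real) set \<Rightarrow> bool" where
  "loc_lip_grad I h D \<longleftrightarrow> (\<forall>y\<in>D. \<exists>r>0. \<exists>K. \<forall>z\<in>D. \<forall>w\<in>D.
      nrm I (vsub z y) < r \<and> nrm I (vsub w y) < r \<longrightarrow>
      nrm I (vsub (egrad I h z) (egrad I h w)) \<le> K * nrm I (vsub z w))"

definition proper_closed_convex :: "'a set \<Rightarrow> (('a \<Rightarrow> real) \<Rightarrow> ereal) \<Rightarrow> bool" where
  "proper_closed_convex I \<phi> \<longleftrightarrow> (\<forall>x\<in>vecs I. \<phi> x \<noteq> -\<infinity>) \<and> (\<exists>x\<in>vecs I. \<phi> x \<noteq> \<infinity>) \<and>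
     convex_fn (vecs I) \<phi> \<and>
     (\<forall>u y. (\<forall>k. u k \<in> vecs I) \<and> y \<in> vecs I \<and> (\<lambda>k. nrm I (vsub (u k) y)) \<longlonglongrightarrow> 0 \<longrightarrow>
        \<phi> y \<le> liminf (\<lambda>k. \<phi> (u k)))"

definition env :: "'a set \<Rightarrow> (('a \<Rightarrow> real) \<Rightarrow> ereal) \<Rightarrow> ('a \<Rightarrow> real) \<Rightarrow> ereal" where
  "env I g y = (INF z\<in>vecs I. g z + ereal ((nrm I (vsub y z))\<^sup>2 / 2))"

definition prox :: "'a set \<Rightarrow> (('a \<Rightarrow> real) \<Rightarrow> ereal) \<Rightarrow> ('a \<Rightarrow> real) \<Rightarrow> ('a \<Rightarrow> real)" where
  "prox I g y = (THE p. p \<in> vecs I \<and> (\<forall>z\<in>vecs I.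
      g p + ereal ((nrm I (vsub y p))\<^sup>2 / 2) \<le> g z + ereal ((nrm I (vsub y z))\<^sup>2 / 2)))"

definition fstar :: "(nat \<Rightarrow> nat) \<Rightarrow> (nat \<Rightarrow> real) \<Rightarrow> (nat \<Rightarrow> (nat \<Rightarrow> real) \<Rightarrow> real) \<Rightarrow> nat \<Rightarrow> (nat \<Rightarrow> real) \<Rightarrow> ereal" where
  "fstar m \<gamma> f i = conj {..<m i} (fhat {..<m i} (\<gamma> i) (f i))"

definition blkI :: "(nat \<Rightarrow> nat) \<Rightarrow> (nat \<Rightarrow> nat) \<Rightarrow> nat \<Rightarrow> (nat \<times> nat) set" where
  "blkI m \<kappa> b = {(j, r). j < b \<and> r < m (\<kappa> j)}"

definition blk :: "(nat \<times> nat \<Rightarrow> real) \<Rightarrow> nat \<Rightarrow> (nat \<Rightarrow> real)" where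
  "blk \<xi> j = (\<lambda>r. \<xi> (j, r))"

definition matv :: "nat \<Rightarrow> nat \<Rightarrow> (nat \<Rightarrow> nat \<Rightarrow> real) \<Rightarrow> (nat \<Rightarrow> real) \<Rightarrow> (nat \<Rightarrow> real)" where
  "matv mm n M y = (\<lambda>r. if r < mm then (\<Sum>c<n. M r c * y c) else 0)"

definition ASt :: "nat \<Rightarrow> (nat \<Rightarrow> nat) \<Rightarrow> (nat \<Rightarrow> nat \<Rightarrow> nat \<Rightarrow> real) \<Rightarrow> (nat \<Rightarrow> nat) \<Rightarrow> nat
    \<Rightarrow> (nat \<times> nat \<Rightarrow> real) \<Rightarrow> (nat \<Rightarrow> real)" where
  "ASt n m A \<kappa> b \<xi> = (\<lambda>c. if c < n then
      (1 / real b) * (\<Sum>j<b. \<Sum>r<m (\<kappa> j). A (\<kappa> j) r c * \<xi> (j, r)) else 0)"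

definition zS :: "nat \<Rightarrow> (nat \<Rightarrow> nat) \<Rightarrow> (nat \<Rightarrow> nat \<Rightarrow> nat \<Rightarrow> real) \<Rightarrow> (nat \<Rightarrow> nat) \<Rightarrow> nat \<Rightarrow> real
    \<Rightarrow> (nat \<Rightarrow> real) \<Rightarrow> (nat \<Rightarrow> real) \<Rightarrow> (nat \<times> nat \<Rightarrow> real) \<Rightarrow> (nat \<Rightarrow> real)" where
  "zS n m A \<kappa> b \<alpha> x v \<xi> = (\<lambda>c. x c - \<alpha> * ASt n m A \<kappa> b \<xi> c + v c)"

definition US :: "nat \<Rightarrow> (nat \<Rightarrow> nat) \<Rightarrow> (nat \<Rightarrow> nat \<Rightarrow> nat \<Rightarrow> real) \<Rightarrow> (nat \<Rightarrow> (nat \<Rightarrow> real) \<Rightarrow> real)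
    \<Rightarrow> (nat \<Rightarrow> real) \<Rightarrow> ((nat \<Rightarrow> real) \<Rightarrow> ereal) \<Rightarrow> (nat \<Rightarrow> nat) \<Rightarrow> nat \<Rightarrow> real
    \<Rightarrow> (nat \<Rightarrow> real) \<Rightarrow> (nat \<Rightarrow> real) \<Rightarrow> (nat \<times> nat \<Rightarrow> real) \<Rightarrow> real" where
  "US n m A f \<gamma> \<phi> \<kappa> b \<alpha> x v \<xi> =
     (\<Sum>j<b. real_of_ereal (fstar m \<gamma> f (\<kappa> j) (blk \<xi> j)))
     + real b / (2 * \<alpha>) * (nrm {..<n} (zS n m A \<kappa> b \<alpha> x v \<xi>))\<^sup>2
     - real b / \<alpha> * real_of_ereal (env {..<n} (\<lambda>w. ereal \<alpha> * \<phi> w) (zS n m A \<kappa> b \<alpha> x v \<xi>))"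

definition VS :: "nat \<Rightarrow> (nat \<Rightarrow> nat) \<Rightarrow> (nat \<Rightarrow> nat \<Rightarrow> nat \<Rightarrow> real) \<Rightarrow> (nat \<Rightarrow> (nat \<Rightarrow> real) \<Rightarrow> real)
    \<Rightarrow> (nat \<Rightarrow> real) \<Rightarrow> ((nat \<Rightarrow> real) \<Rightarrow> ereal) \<Rightarrow> (nat \<Rightarrow> nat) \<Rightarrow> nat \<Rightarrow> real
    \<Rightarrow> (nat \<Rightarrow> real) \<Rightarrow> (nat \<Rightarrow> real) \<Rightarrow> (nat \<times> nat \<Rightarrow> real) \<Rightarrow> (nat \<times> nat \<Rightarrow> real)" where
  "VS n m A f \<gamma> \<phi> \<kappa> b \<alpha> x v \<xi> = (\<lambda>(j, r). if j < b \<and> r < m (\<kappa> j) then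
      egrad {..<m (\<kappa> j)} (fstar m \<gamma> f (\<kappa> j)) (blk \<xi> j) r
      - matv (m (\<kappa> j)) n (A (\<kappa> j))
          (prox {..<n} (\<lambda>w. ereal \<alpha> * \<phi> w) (zS n m A \<kappa> b \<alpha> x v \<xi>)) r
      else 0)"

end

theory Submission
  imports Defs
begin

text \<open>
  U is the sum of the block-separable function xi |-> sum_j fhat_kappa(j)^*(xi_j) and of b/alpha
  times G(z) = |z|^2/2 - env(z), composed with the affine map xi |-> z(xi). Each fhat_i has a
  quadratic upper model of curvature L_i + gamma_i at every point, so its conjugate is
  1/(L_i + gamma_i)-strongly convex on its domain; G is convex, being the conjugate of
  alpha phi + |.|^2/2. Adding the two parts gives strong convexity with modulus mu_*. For the
  gradient, the optimality of the proximal point shows that G has gradient prox(z) with a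
  quadratic remainder, so the chain rule through z(xi) contributes -A_kappa(j) prox(z(xi)) to
  block j, next to the gradient of the j-th conjugate.
\<close>

lemma nrm_sq: "finite I \<Longrightarrow> (nrm I u)\<^sup>2 = (\<Sum>a\<in>I. (u a)\<^sup>2)"
  unfolding nrm_def L2_set_def by (simp add: sum_nonneg)

lemma nrm_nonneg [simp]: "0 \<le> nrm I u"
  unfolding nrm_def by simp

lemma ip_le_nrm_mult: "ip I u w \<le> nrm I u * nrm I w"
proof -
  have "ip I u w \<le> (\<Sum>a\<in>I. \<bar>u a\<bar> * \<bar>w a\<bar>)"
    unfolding ip_def by (rule sum_mono) (simp add: abs_mult[symmetric])
  also have "\<dots> \<le> nrm I u * nrm I w" unfolding nrm_def by (rule L2_set_mult_ineq)
  finally show ?thesis .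
qed

lemma nrm_scale: "nrm I (\<lambda>a. c * u a) = \<bar>c\<bar> * nrm I u"
  unfolding nrm_def L2_set_def
  by (simp add: power_mult_distrib sum_distrib_left[symmetric] real_sqrt_mult)

lemma abs_le_nrm:
  assumes "finite I" "a \<in> I"
  shows "\<bar>u a\<bar> \<le> nrm I u"
proof -
  have "(u a)\<^sup>2 \<le> (\<Sum>x\<in>I. (u x)\<^sup>2)" using assms by (intro member_le_sum) auto
  then have "sqrt ((u a)\<^sup>2) \<le> sqrt (\<Sum>x\<in>I. (u x)\<^sup>2)" by (rule real_sqrt_le_mono)
  then show ?thesis unfolding nrm_def L2_set_def by simp
qed

lemma vecs_eq_if_nrm_vsub_eq_0:
  "finite I \<Longrightarrow> u \<in> vecs I \<Longrightarrow> w \<in> vecs I \<Longrightarrow> nrm I (vsub u w) = 0 \<Longrightarrow> u = w"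
proof
  fix a assume "finite I" "u \<in> vecs I" "w \<in> vecs I" "nrm I (vsub u w) = 0"
  then show "u a = w a" unfolding nrm_def vecs_def vsub_def
    by (cases "a \<in> I") (auto simp: L2_set_eq_0_iff)
qed

lemma vecs_lincomb: "u \<in> vecs I \<Longrightarrow> w \<in> vecs I \<Longrightarrow> (\<lambda>a. s * u a + t * w a) \<in> vecs I"
  unfolding vecs_def by auto

lemma vsub_vecs: "u \<in> vecs I \<Longrightarrow> w \<in> vecs I \<Longrightarrow> vsub u w \<in> vecs I"
  unfolding vecs_def vsub_def by auto

lemma zero_vecs: "(\<lambda>a. 0) \<in> vecs I"
  unfolding vecs_def by simp

lemma ip_scale_right: "ip I g (\<lambda>a. c * d a) = c * ip I g d"
  unfolding ip_def by (simp add: sum_distrib_left algebra_simps)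

lemma ip_diff_left: "ip I (vsub g h) d = ip I g d - ip I h d"
  unfolding ip_def vsub_def by (simp add: sum_subtractf algebra_simps)

lemma ip_add_left: "ip I (\<lambda>a. g a + h a) d = ip I g d + ip I h d"
  unfolding ip_def by (simp add: sum.distrib algebra_simps)

lemma ip_lincomb_left: "ip I (\<lambda>a. s * u a + r * w a) z = s * ip I u z + r * ip I w z"
  unfolding ip_def by (simp add: sum.distrib sum_distrib_left algebra_simps)

lemma nrm_vsub_commute: "nrm I (vsub x y) = nrm I (vsub y x)"
  using nrm_scale[of I "-1" "vsub y x"] by (simp add: vsub_def)

lemma nrm_vsub_triangle: "nrm I (vsub x z) \<le> nrm I (vsub x y) + nrm I (vsub y z)"
proof -
  have "vsub x z = (\<lambda>a. vsub x y a + vsub y z a)" unfolding vsub_def by auto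
  then show ?thesis unfolding nrm_def by (metis L2_set_triangle_ineq)
qed

lemma nrm_vsub_convex_comb:
  assumes "finite I"
  shows "(nrm I (vsub (\<lambda>a. t * x a + (1 - t) * y a) w))\<^sup>2 =
     t * (nrm I (vsub x w))\<^sup>2 + (1 - t) * (nrm I (vsub y w))\<^sup>2 - t * (1 - t) * (nrm I (vsub x y))\<^sup>2"
proof -
  have "(\<Sum>a\<in>I. (t * x a + (1 - t) * y a - w a)\<^sup>2)
      = (\<Sum>a\<in>I. t * (x a - w a)\<^sup>2 + (1 - t) * (y a - w a)\<^sup>2 - t * (1 - t) * (x a - y a)\<^sup>2)"
    by (rule sum.cong) (auto simp: power2_eq_square algebra_simps)
  then show ?thesis
    using assms by (simp add: nrm_sq vsub_def sum_subtractf sum.distrib sum_distrib_left)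
qed

lemma nrm_convex_comb:
  "finite I \<Longrightarrow> (nrm I (\<lambda>a. t * x a + (1 - t) * y a))\<^sup>2 =
     t * (nrm I x)\<^sup>2 + (1 - t) * (nrm I y)\<^sup>2 - t * (1 - t) * (nrm I (vsub x y))\<^sup>2"
  using nrm_vsub_convex_comb[of I t x y "\<lambda>a. 0"] by (simp add: vsub_def)

lemma half_nrm_sq_diff_eq_ip:
  assumes fin: "finite I"
  shows "(nrm I z')\<^sup>2/2 - (nrm I z)\<^sup>2/2 - (nrm I (vsub z' q))\<^sup>2/2 + (nrm I (vsub z q))\<^sup>2/2
    = ip I q (vsub z' z)"
proof -
  have "(nrm I z')\<^sup>2/2 - (nrm I z)\<^sup>2/2 - (nrm I (vsub z' q))\<^sup>2/2 + (nrm I (vsub z q))\<^sup>2/2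
     = (\<Sum>a\<in>I. (z' a)\<^sup>2 - (z a)\<^sup>2 - (z' a - q a)\<^sup>2 + (z a - q a)\<^sup>2) / 2"
    using nrm_sq[OF fin] unfolding vsub_def by (simp add: sum_subtractf sum.distrib field_simps)
  also have "\<dots> = (\<Sum>a\<in>I. 2 * (q a * (z' a - z a))) / 2"
    by (intro arg_cong[where f="\<lambda>x. x / 2"] sum.cong) (auto simp: power2_eq_square algebra_simps)
  also have "\<dots> = ip I q (vsub z' z)"
    unfolding ip_def vsub_def by (simp add: sum_distrib_left[symmetric])
  finally show ?thesis .
qed

lemma vecs_Cauchy_limit:
  assumes fin: "finite I" and u: "\<And>k. u k \<in> vecs I"
    and Cauchy: "\<And>e. 0 < e \<Longrightarrow> \<exists>M. \<forall>k\<ge>M. \<forall>l\<ge>M. nrm I (vsub (u k) (u l)) < e"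
  obtains p where "p \<in> vecs I" "(\<lambda>k. nrm I (vsub (u k) p)) \<longlonglongrightarrow> 0" "\<And>a. (\<lambda>k. u k a) \<longlonglongrightarrow> p a"
proof -
  have "Cauchy (\<lambda>k. u k a)" for a
  proof (cases "a \<in> I")
    case True
    show ?thesis
    proof (rule CauchyI)
      fix e :: real assume "0 < e"
      then obtain M where "\<forall>k\<ge>M. \<forall>l\<ge>M. nrm I (vsub (u k) (u l)) < e" using Cauchy by blast
      then show "\<exists>M. \<forall>k\<ge>M. \<forall>l\<ge>M. norm (u k a - u l a) < e"
        using abs_le_nrm[OF fin True, of "vsub (u _) (u _)"] unfolding vsub_def
        by (smt (verit, ccfv_threshold) real_norm_def)
    qed
  next
    case False
    then show ?thesis using u unfolding vecs_def by (simp add: convergent_Cauchy convergent_const)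
  qed
  then obtain p where conv: "\<And>a. (\<lambda>k. u k a) \<longlonglongrightarrow> p a"
    unfolding Cauchy_convergent_iff convergent_def by metis
  have "p a = 0" if "a \<notin> I" for a
  proof -
    have "(\<lambda>k. u k a) = (\<lambda>k. 0)" using u that unfolding vecs_def by auto
    then show ?thesis using conv[of a] LIMSEQ_unique by auto
  qed
  then have "p \<in> vecs I" unfolding vecs_def by blast
  moreover have "(\<lambda>k. sqrt (\<Sum>a\<in>I. (u k a - p a)\<^sup>2)) \<longlonglongrightarrow> sqrt (\<Sum>a\<in>I. (p a - p a)\<^sup>2)"
    by (intro tendsto_intros conv)
  then have "(\<lambda>k. nrm I (vsub (u k) p)) \<longlonglongrightarrow> 0"
    unfolding nrm_def L2_set_def vsub_def by simp
  ultimately show ?thesis using conv that by blast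
qed

section \<open>Smoothness and conjugates\<close>

lemma has_grad_along_line:
  assumes fin: "finite I" and hg: "has_grad I f g (\<lambda>a. z a + s * d a)"
    and z: "z \<in> vecs I" and d: "d \<in> vecs I"
  shows "((\<lambda>t. f (\<lambda>a. z a + t * d a)) has_real_derivative ip I g d) (at s)"
proof -
  let ?y = "\<lambda>t. (\<lambda>a. z a + t * d a)"
  have "((\<lambda>t. (f (?y t) - f (?y s)) / (t - s)) \<longlongrightarrow> ip I g d) (at s)"
  proof (rule LIM_I)
    fix r :: real assume r: "0 < r"
    define e where "e = r / (nrm I d + 1)"
    have np: "0 < nrm I d + 1" using nrm_nonneg[of I d] by linarith
    have "0 < e" unfolding e_def using r np by simp
    then obtain \<delta> where \<delta>: "\<delta> > 0" and H: "\<forall>Z\<in>vecs I. nrm I (vsub Z (?y s)) < \<delta> \<longrightarrow>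
        \<bar>f Z - f (?y s) - ip I g (vsub Z (?y s))\<bar> \<le> e * nrm I (vsub Z (?y s))"
      using hg unfolding has_grad_def by blast
    have er: "e * nrm I d < r"
    proof -
      have "e * nrm I d = r * (nrm I d / (nrm I d + 1))" unfolding e_def by simp
      also have "\<dots> < r * 1" using r np by (intro mult_strict_left_mono) auto
      finally show ?thesis by simp
    qed
    show "\<exists>s0>0. \<forall>t. t \<noteq> s \<and> norm (t - s) < s0 \<longrightarrow>
        norm ((f (?y t) - f (?y s)) / (t - s) - ip I g d) < r"
    proof (intro exI[of _ "\<delta> / (nrm I d + 1)"] conjI allI impI)
      show "0 < \<delta> / (nrm I d + 1)" using \<delta> np by simp
      fix t assume t: "t \<noteq> s \<and> norm (t - s) < \<delta> / (nrm I d + 1)"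
      have vs: "vsub (?y t) (?y s) = (\<lambda>a. (t - s) * d a)"
        unfolding vsub_def by (auto simp: algebra_simps)
      have "\<bar>t - s\<bar> * nrm I d \<le> \<bar>t - s\<bar> * (nrm I d + 1)" by (simp add: mult_left_mono)
      also have "\<dots> < \<delta>" using t np by (simp add: pos_less_divide_eq)
      finally have "nrm I (vsub (?y t) (?y s)) < \<delta>" by (simp add: vs nrm_scale)
      moreover have "?y t \<in> vecs I" using z d unfolding vecs_def by auto
      ultimately have "\<bar>f (?y t) - f (?y s) - ip I g (vsub (?y t) (?y s))\<bar>
          \<le> e * nrm I (vsub (?y t) (?y s))"
        using H by blast
      then have "\<bar>f (?y t) - f (?y s) - (t - s) * ip I g d\<bar> \<le> (e * nrm I d) * \<bar>t - s\<bar>"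
        unfolding vs ip_scale_right nrm_scale by (simp add: mult_ac)
      then have "\<bar>(f (?y t) - f (?y s) - (t - s) * ip I g d) / (t - s)\<bar> \<le> e * nrm I d"
        using t by (simp add: abs_divide pos_divide_le_eq)
      moreover have "(f (?y t) - f (?y s) - (t - s) * ip I g d) / (t - s)
          = (f (?y t) - f (?y s)) / (t - s) - ip I g d"
        using t by (simp add: diff_divide_distrib)
      ultimately show "norm ((f (?y t) - f (?y s)) / (t - s) - ip I g d) < r" using er by simp
    qed
  qed
  then show ?thesis by (rule has_field_derivative_iff[THEN iffD2])
qed

lemma lsmooth_has_grad: "lsmooth I L f \<Longrightarrow> y \<in> vecs I \<Longrightarrow> has_grad I f (grad I f y) y"
  unfolding lsmooth_def grad_def by (metis someI)

lemma lsmooth_descent: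
  assumes fin: "finite I" and ls: "lsmooth I L f" and z: "z \<in> vecs I" and w: "w \<in> vecs I"
  shows "f w \<le> f z + ip I (grad I f z) (vsub w z) + L/2 * (nrm I (vsub w z))\<^sup>2"
proof -
  define d where "d = vsub w z"
  have d: "d \<in> vecs I" using vsub_vecs z w d_def by simp
  let ?y = "\<lambda>t. (\<lambda>a. z a + t * d a)"
  have yv: "\<And>t. ?y t \<in> vecs I" using z d unfolding vecs_def by auto
  have y1: "?y 1 = w" unfolding d_def vsub_def by auto
  define \<psi> where "\<psi> t = f (?y t) - t * ip I (grad I f z) d - L * t\<^sup>2 / 2 * (nrm I d)\<^sup>2" for t
  have "\<psi> 1 \<le> \<psi> 0"
  proof (rule DERIV_nonpos_imp_nonincreasing[of 0 1 \<psi>])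
    fix t :: real assume t: "0 \<le> t" "t \<le> 1"
    have "((\<lambda>t. f (?y t)) has_real_derivative ip I (grad I f (?y t)) d) (at t)"
      using has_grad_along_line[OF fin lsmooth_has_grad[OF ls yv] z d] .
    then have D: "(\<psi> has_real_derivative
        (ip I (grad I f (?y t)) d - ip I (grad I f z) d - L * t * (nrm I d)\<^sup>2)) (at t)"
      unfolding \<psi>_def[abs_def] by (auto intro!: derivative_eq_intros)
    have "ip I (grad I f (?y t)) d - ip I (grad I f z) d = ip I (vsub (grad I f (?y t)) (grad I f z)) d"
      by (simp add: ip_diff_left)
    also have "\<dots> \<le> nrm I (vsub (grad I f (?y t)) (grad I f z)) * nrm I d" by (rule ip_le_nrm_mult)
    also have "\<dots> \<le> (L * nrm I (vsub (?y t) z)) * nrm I d"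
      using ls yv z unfolding lsmooth_def by (intro mult_right_mono) auto
    also have "vsub (?y t) z = (\<lambda>a. t * d a)" unfolding vsub_def by auto
    also have "L * nrm I (\<lambda>a. t * d a) * nrm I d = L * t * (nrm I d)\<^sup>2"
      using t by (simp add: nrm_scale power2_eq_square)
    finally show "\<exists>y. (\<psi> has_real_derivative y) (at t) \<and> y \<le> 0" using D by force
  qed simp
  then show ?thesis using y1 unfolding \<psi>_def d_def by simp
qed

lemma fhat_descent:
  assumes fin: "finite I" and ls: "lsmooth I L f" and z: "z \<in> vecs I" and w: "w \<in> vecs I"
  shows "fhat I \<gamma> f w \<le> fhat I \<gamma> f z + ip I (\<lambda>a. grad I f z a + \<gamma> * z a) (vsub w z)
    + (L + \<gamma>)/2 * (nrm I (vsub w z))\<^sup>2"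
proof -
  have "(\<Sum>a\<in>I. (w a)\<^sup>2) = (\<Sum>a\<in>I. (z a)\<^sup>2 + 2 * (z a * (w a - z a)) + (w a - z a)\<^sup>2)"
    by (rule sum.cong) (auto simp: power2_eq_square algebra_simps)
  then have e: "(\<Sum>a\<in>I. (w a)\<^sup>2)
      = (\<Sum>a\<in>I. (z a)\<^sup>2) + 2 * (\<Sum>a\<in>I. z a * (w a - z a)) + (\<Sum>a\<in>I. (w a - z a)\<^sup>2)"
    by (simp add: sum.distrib sum_distrib_left)
  have "\<gamma> / 2 * (nrm I w)\<^sup>2 = \<gamma> / 2 * (nrm I z)\<^sup>2 + \<gamma> * ip I z (vsub w z)
      + \<gamma> / 2 * (nrm I (vsub w z))\<^sup>2"
    unfolding nrm_sq[OF fin] ip_def vsub_def e by (simp add: algebra_simps)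
  moreover have "ip I (\<lambda>a. grad I f z a + \<gamma> * z a) (vsub w z)
      = ip I (grad I f z) (vsub w z) + \<gamma> * ip I z (vsub w z)"
    unfolding ip_def by (simp add: sum.distrib sum_distrib_left algebra_simps)
  ultimately show ?thesis
    using lsmooth_descent[OF fin ls z w] unfolding fhat_def by (simp add: field_simps)
qed

lemma conj_gt_MInfty: "conj I h y > -\<infinity>"
proof -
  have "ereal (ip I y (\<lambda>a. 0) - h (\<lambda>a. 0)) \<le> conj I h y"
    unfolding conj_def using zero_vecs by (rule SUP_upper)
  then show ?thesis by (metis MInfty_neq_ereal(1) ereal_infty_less_eq(2) not_MInfty_nonneg not_le)
qed

text \<open>The supremum defining conj h y is evaluated at w = z + (y - g)/K.\<close>

lemma conj_ge_quadratic_model: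
  assumes fin: "finite I" and K: "0 < K" and z: "z \<in> vecs I"
    and model: "\<forall>w\<in>vecs I. h w \<le> h z + ip I g (vsub w z) + K/2 * (nrm I (vsub w z))\<^sup>2"
  shows "ereal (ip I y z - h z + (nrm I (vsub y g))\<^sup>2 / (2 * K)) \<le> conj I h y"
proof -
  define w where "w = (\<lambda>a. if a \<in> I then z a + (y a - g a) / K else 0)"
  have wv: "w \<in> vecs I" unfolding w_def vecs_def by auto
  have "(nrm I (vsub w z))\<^sup>2 = (\<Sum>a\<in>I. ((y a - g a) / K)\<^sup>2)"
    using nrm_sq[OF fin] unfolding vsub_def w_def by (auto intro!: sum.cong)
  then have "ip I y w - ip I g (vsub w z) - K/2 * (nrm I (vsub w z))\<^sup>2
      = (\<Sum>a\<in>I. y a * (z a + (y a - g a) / K) - g a * ((y a - g a) / K) - K/2 * ((y a - g a) / K)\<^sup>2)"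
    unfolding ip_def w_def vsub_def by (simp add: sum_subtractf sum_distrib_left)
  also have "\<dots> = (\<Sum>a\<in>I. y a * z a + (y a - g a)\<^sup>2 / (2 * K))"
    using K by (intro sum.cong) (auto simp: field_simps power2_eq_square)
  also have "\<dots> = ip I y z + (nrm I (vsub y g))\<^sup>2 / (2 * K)"
    using fin by (simp add: ip_def nrm_sq vsub_def sum.distrib sum_divide_distrib)
  finally have "ip I y z - h z + (nrm I (vsub y g))\<^sup>2 / (2 * K) \<le> ip I y w - h w"
    using model wv by fastforce
  moreover have "ereal (ip I y w - h w) \<le> conj I h y" unfolding conj_def using wv by (rule SUP_upper)
  ultimately show ?thesis by (meson ereal_less_eq(3) order_trans)
qed

section \<open>Strong convexity inequalities\<close>

definition convex_with_modulus ::
    "'a set \<Rightarrow> ('a \<Rightarrow> real) set \<Rightarrow> real \<Rightarrow> (('a \<Rightarrow> real) \<Rightarrow> real) \<Rightarrow> bool" where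
  "convex_with_modulus I E \<mu> h \<longleftrightarrow> (\<forall>x\<in>E. \<forall>y\<in>E. \<forall>t. 0 \<le> t \<and> t \<le> 1 \<longrightarrow>
     h (\<lambda>a. t * x a + (1 - t) * y a)
       \<le> t * h x + (1 - t) * h y - \<mu> / 2 * (t * (1 - t)) * (nrm I (vsub x y))\<^sup>2)"

lemma convex_with_modulusD:
  "convex_with_modulus I E \<mu> h \<Longrightarrow> x \<in> E \<Longrightarrow> y \<in> E \<Longrightarrow> 0 \<le> t \<Longrightarrow> t \<le> 1 \<Longrightarrow>
    h (\<lambda>a. t * x a + (1 - t) * y a)
      \<le> t * h x + (1 - t) * h y - \<mu> / 2 * (t * (1 - t)) * (nrm I (vsub x y))\<^sup>2"
  unfolding convex_with_modulus_def by blast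

lemma strongly_convex_onI:
  assumes "finite I" and "convex_with_modulus I E \<mu> h"
  shows "strongly_convex_on I E \<mu> h"
  unfolding strongly_convex_on_def convex_fn_def
proof (intro ballI allI impI)
  fix x y and t :: real assume "x \<in> E" "y \<in> E" "0 \<le> t \<and> t \<le> 1"
  define ht where "ht = h (\<lambda>a. t * x a + (1 - t) * y a)"
  have "ht \<le> t * h x + (1 - t) * h y - \<mu> / 2 * (t * (1 - t)) * (nrm I (vsub x y))\<^sup>2"
    unfolding ht_def using assms(2) \<open>x \<in> E\<close> \<open>y \<in> E\<close> \<open>0 \<le> t \<and> t \<le> 1\<close>
    by (blast dest: convex_with_modulusD)
  moreover have "t * (h x - \<mu> / 2 * (nrm I x)\<^sup>2) + (1 - t) * (h y - \<mu> / 2 * (nrm I y)\<^sup>2)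
      - (ht - \<mu> / 2 * (t * (nrm I x)\<^sup>2 + (1 - t) * (nrm I y)\<^sup>2 - t * (1 - t) * (nrm I (vsub x y))\<^sup>2))
    = t * h x + (1 - t) * h y - \<mu> / 2 * (t * (1 - t)) * (nrm I (vsub x y))\<^sup>2 - ht"
    by (simp add: field_simps)
  ultimately show "ereal (h (\<lambda>a. t * x a + (1 - t) * y a) - \<mu> / 2 * (nrm I (\<lambda>a. t * x a + (1 - t) * y a))\<^sup>2)
      \<le> ereal t * ereal (h x - \<mu> / 2 * (nrm I x)\<^sup>2) + ereal (1 - t) * ereal (h y - \<mu> / 2 * (nrm I y)\<^sup>2)"
    unfolding nrm_convex_comb[OF assms(1)] ht_def[symmetric] by simp
qed

lemma convex_with_modulus_mono:
  assumes "convex_with_modulus I E \<mu> h" and "\<mu>' \<le> \<mu>"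
  shows "convex_with_modulus I E \<mu>' h"
  unfolding convex_with_modulus_def
proof (intro ballI allI impI)
  fix x y and t :: real assume "x \<in> E" "y \<in> E" and t: "0 \<le> t \<and> t \<le> 1"
  have "\<mu>' / 2 * (t * (1 - t)) * (nrm I (vsub x y))\<^sup>2 \<le> \<mu> / 2 * (t * (1 - t)) * (nrm I (vsub x y))\<^sup>2"
    using t assms(2) by (intro mult_right_mono) auto
  then show "h (\<lambda>a. t * x a + (1 - t) * y a)
      \<le> t * h x + (1 - t) * h y - \<mu>' / 2 * (t * (1 - t)) * (nrm I (vsub x y))\<^sup>2"
    using convex_with_modulusD[OF assms(1) \<open>x \<in> E\<close> \<open>y \<in> E\<close>, of t] t by linarith
qed

lemma convex_with_modulus_add:
  assumes "convex_with_modulus I E \<mu>1 h1" and "convex_with_modulus I E \<mu>2 h2"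
  shows "convex_with_modulus I E (\<mu>1 + \<mu>2) (\<lambda>x. h1 x + h2 x)"
  unfolding convex_with_modulus_def
proof (intro ballI allI impI)
  fix x y and t :: real assume "x \<in> E" "y \<in> E" "0 \<le> t \<and> t \<le> 1"
  then have "h1 (\<lambda>a. t * x a + (1 - t) * y a) + h2 (\<lambda>a. t * x a + (1 - t) * y a)
      \<le> (t * h1 x + (1 - t) * h1 y - \<mu>1 / 2 * (t * (1 - t)) * (nrm I (vsub x y))\<^sup>2)
        + (t * h2 x + (1 - t) * h2 y - \<mu>2 / 2 * (t * (1 - t)) * (nrm I (vsub x y))\<^sup>2)"
    by (intro add_mono convex_with_modulusD[OF assms(1)] convex_with_modulusD[OF assms(2)]) auto
  then show "h1 (\<lambda>a. t * x a + (1 - t) * y a) + h2 (\<lambda>a. t * x a + (1 - t) * y a)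
      \<le> t * (h1 x + h2 x) + (1 - t) * (h1 y + h2 y) - (\<mu>1 + \<mu>2) / 2 * (t * (1 - t)) * (nrm I (vsub x y))\<^sup>2"
    by (simp add: algebra_simps add_divide_distrib)
qed

lemma convex_with_modulus_scale:
  assumes "convex_with_modulus I E \<mu> h" and "0 \<le> c"
  shows "convex_with_modulus I E (c * \<mu>) (\<lambda>x. c * h x)"
  unfolding convex_with_modulus_def
proof (intro ballI allI impI)
  fix x y and t :: real assume "x \<in> E" "y \<in> E" "0 \<le> t \<and> t \<le> 1"
  then have "c * h (\<lambda>a. t * x a + (1 - t) * y a)
      \<le> c * (t * h x + (1 - t) * h y - \<mu> / 2 * (t * (1 - t)) * (nrm I (vsub x y))\<^sup>2)"
    using assms(2) by (intro mult_left_mono convex_with_modulusD[OF assms(1)]) auto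
  then show "c * h (\<lambda>a. t * x a + (1 - t) * y a)
      \<le> t * (c * h x) + (1 - t) * (c * h y) - c * \<mu> / 2 * (t * (1 - t)) * (nrm I (vsub x y))\<^sup>2"
    by (simp add: algebra_simps)
qed

lemma convex_with_modulus_affine_comp:
  assumes "convex_with_modulus J (vecs J) 0 G" and "\<And>x. x \<in> E \<Longrightarrow> T x \<in> vecs J"
    and "\<And>x y t. T (\<lambda>a. t * x a + (1 - t) * y a) = (\<lambda>c. t * T x c + (1 - t) * T y c)"
  shows "convex_with_modulus I E 0 (\<lambda>x. G (T x))"
  using assms unfolding convex_with_modulus_def by simp

lemma conj_convex_comb_bound:
  assumes fin: "finite I" and K: "0 < K" and z: "z \<in> vecs I"
    and g: "\<forall>w\<in>vecs I. h w \<le> h z + ip I g (vsub w z) + K/2 * (nrm I (vsub w z))\<^sup>2"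
    and C1: "conj I h y1 = ereal c1" and C2: "conj I h y2 = ereal c2" and t: "0 \<le> t" "t \<le> 1"
  shows "ip I (\<lambda>a. t * y1 a + (1 - t) * y2 a) z - h z
    \<le> t * c1 + (1 - t) * c2 - 1 / K / 2 * (t * (1 - t)) * (nrm I (vsub y1 y2))\<^sup>2"
proof -
  define q1 where "q1 = (nrm I (vsub y1 g))\<^sup>2 / (2 * K)"
  define q2 where "q2 = (nrm I (vsub y2 g))\<^sup>2 / (2 * K)"
  have "ip I y1 z - h z + q1 \<le> c1"
    using conj_ge_quadratic_model[OF fin K z g, of y1] C1 unfolding q1_def by simp
  then have k1: "t * (ip I y1 z - h z) + t * q1 \<le> t * c1"
    using t by (metis distrib_left mult_left_mono)
  have "ip I y2 z - h z + q2 \<le> c2"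
    using conj_ge_quadratic_model[OF fin K z g, of y2] C2 unfolding q2_def by simp
  then have k2: "(1 - t) * (ip I y2 z - h z) + (1 - t) * q2 \<le> (1 - t) * c2"
    using t by (metis diff_ge_0_iff_ge distrib_left mult_left_mono)
  have "t * (1 - t) * (nrm I (vsub y1 y2))\<^sup>2
      \<le> t * (nrm I (vsub y1 g))\<^sup>2 + (1 - t) * (nrm I (vsub y2 g))\<^sup>2"
    using nrm_vsub_convex_comb[OF fin, of t y1 y2 g]
      zero_le_power2[of "nrm I (vsub (\<lambda>a. t * y1 a + (1 - t) * y2 a) g)"]
    by linarith
  then have "t * (1 - t) * (nrm I (vsub y1 y2))\<^sup>2 / (2 * K)
      \<le> (t * (nrm I (vsub y1 g))\<^sup>2 + (1 - t) * (nrm I (vsub y2 g))\<^sup>2) / (2 * K)"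
    using K by (intro divide_right_mono) auto
  then have "1 / K / 2 * (t * (1 - t)) * (nrm I (vsub y1 y2))\<^sup>2 \<le> t * q1 + (1 - t) * q2"
    unfolding q1_def q2_def by (simp add: add_divide_distrib)
  with k1 k2 show ?thesis unfolding ip_lincomb_left by (simp add: algebra_simps)
qed

lemma conj_convex_with_modulus:
  assumes fin: "finite I" and K: "0 < K"
    and model: "\<forall>z\<in>vecs I. \<exists>g. \<forall>w\<in>vecs I.
      h w \<le> h z + ip I g (vsub w z) + K/2 * (nrm I (vsub w z))\<^sup>2"
  shows "convex_with_modulus I (edom I (conj I h)) (1 / K) (\<lambda>y. real_of_ereal (conj I h y))"
  unfolding convex_with_modulus_def
proof (intro ballI allI impI)
  fix y1 y2 and t :: real
  assume y1: "y1 \<in> edom I (conj I h)" and y2: "y2 \<in> edom I (conj I h)" and t: "0 \<le> t \<and> t \<le> 1"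
  let ?yt = "\<lambda>a. t * y1 a + (1 - t) * y2 a"
  let ?bound = "t * real_of_ereal (conj I h y1) + (1 - t) * real_of_ereal (conj I h y2)
        - 1 / K / 2 * (t * (1 - t)) * (nrm I (vsub y1 y2))\<^sup>2"
  have C1: "conj I h y1 = ereal (real_of_ereal (conj I h y1))"
    and C2: "conj I h y2 = ereal (real_of_ereal (conj I h y2))"
    using y1 y2 conj_gt_MInfty[of I h] unfolding edom_def
    by (metis (no_types, lifting) less_ereal.simps(2,3) mem_Collect_eq real_of_ereal.elims)+
  have "conj I h ?yt \<le> ereal ?bound"
    unfolding conj_def[of I h ?yt]
  proof (rule SUP_least)
    fix z assume z: "z \<in> vecs I"
    then obtain g where g: "\<forall>w\<in>vecs I. h w \<le> h z + ip I g (vsub w z) + K/2 * (nrm I (vsub w z))\<^sup>2"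
      using model by blast
    show "ereal (ip I ?yt z - h z) \<le> ereal ?bound"
      using conj_convex_comb_bound[OF fin K z g C1 C2] t by simp
  qed
  then show "real_of_ereal (conj I h ?yt) \<le> ?bound"
    using conj_gt_MInfty[of I h ?yt] by (cases "conj I h ?yt") auto
qed

section \<open>The Moreau envelope of a proper closed convex function\<close>

text \<open>|z|^2/2 - env g z is the conjugate of g + |.|^2/2; it is convex, with gradient prox g z.\<close>

definition env_complement :: "'a set \<Rightarrow> (('a \<Rightarrow> real) \<Rightarrow> ereal) \<Rightarrow> ('a \<Rightarrow> real) \<Rightarrow> real" where
  "env_complement I g z = (nrm I z)\<^sup>2 / 2 - real_of_ereal (env I g z)"

context
  fixes I :: "'a set" and \<phi> :: "('a \<Rightarrow> real) \<Rightarrow> ereal" and \<alpha> :: real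
  assumes fin: "finite I" and pcc: "proper_closed_convex I \<phi>" and \<alpha>: "0 < \<alpha>"
begin

lemma phi_real: "w \<in> vecs I \<Longrightarrow> \<phi> w \<noteq> \<infinity> \<Longrightarrow> \<phi> w = ereal (real_of_ereal (\<phi> w))"
  using pcc unfolding proper_closed_convex_def by (cases "\<phi> w") auto

lemma phi_convex_real:
  assumes x: "x \<in> vecs I" "\<phi> x \<noteq> \<infinity>" and y: "y \<in> vecs I" "\<phi> y \<noteq> \<infinity>" and t: "0 \<le> t" "t \<le> 1"
  shows "\<phi> (\<lambda>a. t * x a + (1 - t) * y a) \<noteq> \<infinity> \<and>
    real_of_ereal (\<phi> (\<lambda>a. t * x a + (1 - t) * y a))
      \<le> t * real_of_ereal (\<phi> x) + (1 - t) * real_of_ereal (\<phi> y)"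
proof -
  have "\<phi> (\<lambda>a. t * x a + (1 - t) * y a) \<le> ereal t * \<phi> x + ereal (1 - t) * \<phi> y"
    using pcc x y t unfolding proper_closed_convex_def convex_fn_def by blast
  then have "\<phi> (\<lambda>a. t * x a + (1 - t) * y a)
      \<le> ereal (t * real_of_ereal (\<phi> x) + (1 - t) * real_of_ereal (\<phi> y))"
    using phi_real[OF x] phi_real[OF y] by (metis times_ereal.simps(1) plus_ereal.simps(1))
  moreover have "\<phi> (\<lambda>a. t * x a + (1 - t) * y a) \<noteq> -\<infinity>"
    using pcc vecs_lincomb[OF x(1) y(1)] unfolding proper_closed_convex_def by blast
  ultimately show ?thesis by (cases "\<phi> (\<lambda>a. t * x a + (1 - t) * y a)") auto
qed

lemma phi_locally_bounded_below:
  assumes x0: "x0 \<in> vecs I" and c: "\<phi> x0 = ereal c"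
  shows "\<exists>r>0. \<forall>w\<in>vecs I. nrm I (vsub w x0) \<le> r \<longrightarrow> ereal (c - 1) \<le> \<phi> w"
proof (rule ccontr)
  assume "\<not> ?thesis"
  then have "\<forall>k::nat. \<exists>w. w \<in> vecs I \<and> nrm I (vsub w x0) \<le> inverse (real (Suc k)) \<and> \<phi> w < ereal (c - 1)"
    by (metis inverse_positive_iff_positive not_le of_nat_0_less_iff zero_less_Suc)
  then obtain u where u: "\<And>k. u k \<in> vecs I" "\<And>k. nrm I (vsub (u k) x0) \<le> inverse (real (Suc k))"
      "\<And>k. \<phi> (u k) < ereal (c - 1)" by metis
  have "(\<lambda>k. nrm I (vsub (u k) x0)) \<longlonglongrightarrow> 0"
    by (rule tendsto_sandwich[of "\<lambda>k. 0" _ _ "\<lambda>k. inverse (real (Suc k))"])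
      (use u(2) LIMSEQ_inverse_real_of_nat in auto)
  then have "\<phi> x0 \<le> liminf (\<lambda>k. \<phi> (u k))"
    using pcc u(1) x0 unfolding proper_closed_convex_def by blast
  also have "\<dots> \<le> ereal (c - 1)" by (rule Liminf_le) (auto simp: u(3) less_imp_le)
  finally show False using c by simp
qed

text \<open>Lower semicontinuity bounds \<phi> below near a point of its domain, and convexity propagates
  this bound along rays, so \<phi> grows at most linearly downwards.\<close>

lemma phi_affine_minorant:
  "\<exists>x0\<in>vecs I. \<exists>c0 r. 0 < r \<and> (\<forall>w\<in>vecs I. ereal (c0 - nrm I (vsub w x0) / r) \<le> \<phi> w)"
proof -
  obtain x0 where x0: "x0 \<in> vecs I" "\<phi> x0 \<noteq> \<infinity>"
    using pcc unfolding proper_closed_convex_def by blast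
  define c where "c = real_of_ereal (\<phi> x0)"
  have cx: "\<phi> x0 = ereal c" using phi_real[OF x0] c_def by simp
  obtain r where r: "0 < r" "\<And>w. w \<in> vecs I \<Longrightarrow> nrm I (vsub w x0) \<le> r \<Longrightarrow> ereal (c - 1) \<le> \<phi> w"
    using phi_locally_bounded_below[OF x0(1) cx] by blast
  have "ereal (c - 1 - nrm I (vsub w x0) / r) \<le> \<phi> w" if w: "w \<in> vecs I" for w
  proof (cases "nrm I (vsub w x0) \<le> r \<or> \<phi> w = \<infinity>")
    case True
    then show ?thesis using r w by (auto intro: order_trans[OF _ r(2)])
  next
    case False
    define N where "N = nrm I (vsub w x0)"
    define s where "s = r / N"
    have N: "r < N" and fw: "\<phi> w \<noteq> \<infinity>" using False N_def by auto
    have s: "0 < s" "s \<le> 1" using N r unfolding s_def by auto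
    let ?u = "\<lambda>a. s * w a + (1 - s) * x0 a"
    have uv: "?u \<in> vecs I" using w x0 vecs_lincomb by blast
    have "vsub ?u x0 = (\<lambda>a. s * vsub w x0 a)" unfolding vsub_def by (auto simp: algebra_simps)
    then have "nrm I (vsub ?u x0) = s * N" using s by (simp add: nrm_scale N_def)
    also have "\<dots> = r" unfolding s_def using N r by simp
    finally have A: "ereal (c - 1) \<le> \<phi> ?u" using r(2)[OF uv] by simp
    have B: "\<phi> ?u \<noteq> \<infinity> \<and> real_of_ereal (\<phi> ?u) \<le> s * real_of_ereal (\<phi> w) + (1 - s) * c"
      using phi_convex_real[OF w fw x0 less_imp_le[OF s(1)] s(2)] cx by simp
    then have eu: "\<phi> ?u = ereal (real_of_ereal (\<phi> ?u))" using phi_real[OF uv] by blast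
    have "ereal (c - 1) \<le> ereal (real_of_ereal (\<phi> ?u))" by (subst eu[symmetric]) (rule A)
    then have "c - 1 \<le> real_of_ereal (\<phi> ?u)" by (simp only: ereal_less_eq(3))
    then have "s * (c - real_of_ereal (\<phi> w)) \<le> 1" using B by (simp add: algebra_simps)
    then have "c - 1 - N / r \<le> real_of_ereal (\<phi> w)"
      using s N r unfolding s_def by (simp add: field_simps)
    then show ?thesis using phi_real[OF w fw] N_def by (metis ereal_less_eq(3))
  qed
  then show ?thesis using x0 r by blast
qed

text \<open>The proximal objective in real form; it is only meaningful where \<phi> w < \<infinity>, since
  real_of_ereal \<infinity> = 0.\<close>

definition prox_obj :: "('a \<Rightarrow> real) \<Rightarrow> ('a \<Rightarrow> real) \<Rightarrow> real" where
  "prox_obj z w = \<alpha> * real_of_ereal (\<phi> w) + (nrm I (vsub z w))\<^sup>2 / 2"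

lemma prox_obj_strongly_convex:
  assumes w1: "w1 \<in> vecs I" "\<phi> w1 \<noteq> \<infinity>" and w2: "w2 \<in> vecs I" "\<phi> w2 \<noteq> \<infinity>"
    and t: "0 \<le> t" "t \<le> 1"
  shows "\<phi> (\<lambda>a. t * w1 a + (1 - t) * w2 a) \<noteq> \<infinity> \<and>
    prox_obj z (\<lambda>a. t * w1 a + (1 - t) * w2 a)
      \<le> t * prox_obj z w1 + (1 - t) * prox_obj z w2 - t * (1 - t) / 2 * (nrm I (vsub w1 w2))\<^sup>2"
proof -
  note c = phi_convex_real[OF w1 w2 t]
  have "\<alpha> * real_of_ereal (\<phi> (\<lambda>a. t * w1 a + (1 - t) * w2 a))
      \<le> \<alpha> * (t * real_of_ereal (\<phi> w1) + (1 - t) * real_of_ereal (\<phi> w2))"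
    using c \<alpha> by (intro mult_left_mono) auto
  moreover note nrm_vsub_convex_comb[OF fin, of t w1 w2 z]
  ultimately show ?thesis
    using c nrm_vsub_commute[of I z] unfolding prox_obj_def by (simp add: field_simps)
qed

lemma prox_obj_bounded_below: "z \<in> vecs I \<Longrightarrow> \<exists>B. \<forall>w\<in>vecs I. \<phi> w \<noteq> \<infinity> \<longrightarrow> B \<le> prox_obj z w"
proof -
  assume z: "z \<in> vecs I"
  obtain x0 c0 r where r: "0 < r"
    and lb: "\<And>w. w \<in> vecs I \<Longrightarrow> ereal (c0 - nrm I (vsub w x0) / r) \<le> \<phi> w"
    using phi_affine_minorant by blast
  define \<beta> where "\<beta> = \<alpha> / r"
  have \<beta>: "0 < \<beta>" using \<alpha> r unfolding \<beta>_def by simp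
  have "\<alpha> * c0 - \<beta> * nrm I (vsub z x0) - \<beta>\<^sup>2 / 2 \<le> prox_obj z w"
    if w: "w \<in> vecs I" "\<phi> w \<noteq> \<infinity>" for w
  proof -
    define Nw where "Nw = nrm I (vsub z w)"
    have "c0 - nrm I (vsub w x0) / r \<le> real_of_ereal (\<phi> w)"
      using lb[OF w(1)] phi_real[OF w] by (metis ereal_less_eq(3))
    then have "\<alpha> * (c0 - nrm I (vsub w x0) / r) \<le> \<alpha> * real_of_ereal (\<phi> w)"
      using \<alpha> by (intro mult_left_mono) auto
    then have A: "\<alpha> * c0 - \<beta> * nrm I (vsub w x0) \<le> \<alpha> * real_of_ereal (\<phi> w)"
      unfolding \<beta>_def by (simp add: algebra_simps)
    have "nrm I (vsub w x0) \<le> Nw + nrm I (vsub z x0)"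
      using nrm_vsub_triangle[of I w x0 z] nrm_vsub_commute[of I w z] unfolding Nw_def by simp
    then have "\<beta> * nrm I (vsub w x0) \<le> \<beta> * (Nw + nrm I (vsub z x0))"
      using \<beta> by (intro mult_left_mono) auto
    moreover have "0 \<le> (Nw - \<beta>)\<^sup>2 / 2" by simp
    then have "\<beta> * Nw - \<beta>\<^sup>2 / 2 \<le> Nw\<^sup>2 / 2" by (simp add: power2_eq_square algebra_simps)
    ultimately show ?thesis using A unfolding prox_obj_def Nw_def by (simp add: algebra_simps)
  qed
  then show ?thesis by blast
qed

lemma prox_obj_near_min_close:
  assumes m: "\<forall>w\<in>vecs I. \<phi> w \<noteq> \<infinity> \<longrightarrow> m \<le> prox_obj z w"
    and u: "u \<in> vecs I" "\<phi> u \<noteq> \<infinity>" and w: "w \<in> vecs I" "\<phi> w \<noteq> \<infinity>"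
  shows "(nrm I (vsub u w))\<^sup>2 \<le> 4 * ((prox_obj z u - m) + (prox_obj z w - m))"
proof -
  note mid = prox_obj_strongly_convex[OF u w, of "1/2" z]
  have "(\<lambda>a. 1/2 * u a + (1 - 1/2) * w a) \<in> vecs I" using u w vecs_lincomb by blast
  then have "m \<le> prox_obj z (\<lambda>a. 1/2 * u a + (1 - 1/2) * w a)" using m mid by auto
  then show ?thesis using mid by simp
qed

lemma prox_obj_minimizing_Cauchy:
  assumes m: "\<forall>w\<in>vecs I. \<phi> w \<noteq> \<infinity> \<longrightarrow> m \<le> prox_obj z w"
    and u: "\<And>k. u k \<in> vecs I" "\<And>k. \<phi> (u k) \<noteq> \<infinity>"
      "\<And>k. prox_obj z (u k) < m + inverse (real (Suc k))"
    and e: "0 < e"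
  shows "\<exists>M. \<forall>k\<ge>M. \<forall>l\<ge>M. nrm I (vsub (u k) (u l)) < e"
proof -
  obtain M :: nat where M: "8 / e\<^sup>2 < real M" using reals_Archimedean2 by blast
  have "0 < 8 / e\<^sup>2" using e by simp
  with M have Mp: "0 < real M" by linarith
  have "nrm I (vsub (u k) (u l)) < e" if "M \<le> k" "M \<le> l" for k l
  proof -
    have "inverse (real (Suc k)) \<le> inverse (real M)" "inverse (real (Suc l)) \<le> inverse (real M)"
      using that Mp by (intro le_imp_inverse_le; simp)+
    moreover have "8 / real M < e\<^sup>2" using M Mp e by (simp add: field_simps)
    ultimately have "(nrm I (vsub (u k) (u l)))\<^sup>2 < e\<^sup>2"
      using prox_obj_near_min_close[OF m u(1,2) u(1,2), of k l] u(3)[of k] u(3)[of l]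
      by (simp add: divide_inverse)
    then show ?thesis by (rule power_less_imp_less_base) (use e in simp)
  qed
  then show ?thesis by blast
qed

lemma prox_obj_limit_le:
  assumes u: "\<And>k. u k \<in> vecs I" "\<And>k. \<phi> (u k) \<noteq> \<infinity>" and p: "p \<in> vecs I"
    and lim_norm: "(\<lambda>k. nrm I (vsub (u k) p)) \<longlonglongrightarrow> 0" and lim: "\<And>a. (\<lambda>k. u k a) \<longlonglongrightarrow> p a"
    and bound: "\<And>k. prox_obj z (u k) \<le> c k" and c: "c \<longlonglongrightarrow> c0"
  shows "\<phi> p \<noteq> \<infinity> \<and> prox_obj z p \<le> c0"
proof -
  define b where "b k = (c k - (nrm I (vsub z (u k)))\<^sup>2 / 2) / \<alpha>" for k
  have "(\<lambda>k. \<Sum>a\<in>I. (z a - u k a)\<^sup>2) \<longlonglongrightarrow> (\<Sum>a\<in>I. (z a - p a)\<^sup>2)"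
    by (intro tendsto_intros lim)
  then have "(\<lambda>k. (nrm I (vsub z (u k)))\<^sup>2) \<longlonglongrightarrow> (nrm I (vsub z p))\<^sup>2"
    using nrm_sq[OF fin] unfolding vsub_def by simp
  then have "(\<lambda>k. c k - (nrm I (vsub z (u k)))\<^sup>2 / 2) \<longlonglongrightarrow> c0 - (nrm I (vsub z p))\<^sup>2 / 2"
    by (intro tendsto_diff c tendsto_divide tendsto_const) simp_all
  then have b: "b \<longlonglongrightarrow> (c0 - (nrm I (vsub z p))\<^sup>2 / 2) / \<alpha>"
    unfolding b_def by (rule tendsto_divide[OF _ tendsto_const]) (use \<alpha> in simp)
  have "\<phi> (u k) \<le> ereal (b k)" for k
  proof -
    have "real_of_ereal (\<phi> (u k)) * \<alpha> \<le> c k - (nrm I (vsub z (u k)))\<^sup>2 / 2"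
      using bound[of k] unfolding prox_obj_def by (simp add: mult.commute)
    then have "real_of_ereal (\<phi> (u k)) \<le> b k" unfolding b_def by (simp only: pos_le_divide_eq[OF \<alpha>])
    then show ?thesis using phi_real[OF u(1) u(2)] by (metis ereal_less_eq(3))
  qed
  then have "liminf (\<lambda>k. \<phi> (u k)) \<le> liminf (\<lambda>k. ereal (b k))"
    by (intro Liminf_mono always_eventually allI)
  also have "\<dots> = ereal ((c0 - (nrm I (vsub z p))\<^sup>2 / 2) / \<alpha>)"
    by (intro lim_imp_Liminf trivial_limit_sequentially tendsto_ereal b)
  finally have "\<phi> p \<le> ereal ((c0 - (nrm I (vsub z p))\<^sup>2 / 2) / \<alpha>)"
    using pcc u(1) p lim_norm unfolding proper_closed_convex_def by (meson order_trans)
  moreover from this have "\<phi> p \<noteq> \<infinity>" by auto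
  ultimately have "\<phi> p \<noteq> \<infinity> \<and> real_of_ereal (\<phi> p) \<le> (c0 - (nrm I (vsub z p))\<^sup>2 / 2) / \<alpha>"
    using phi_real[OF p] by (metis ereal_less_eq(3))
  then show ?thesis unfolding prox_obj_def using \<alpha> by (simp add: field_simps)
qed

lemma prox_obj_has_minimizer:
  assumes z: "z \<in> vecs I"
  obtains p where "p \<in> vecs I" "\<phi> p \<noteq> \<infinity>" "\<forall>w\<in>vecs I. \<phi> w \<noteq> \<infinity> \<longrightarrow> prox_obj z p \<le> prox_obj z w"
proof -
  define S where "S = prox_obj z ` {w\<in>vecs I. \<phi> w \<noteq> \<infinity>}"
  have Sne: "S \<noteq> {}" using pcc unfolding S_def proper_closed_convex_def by blast
  have bdd: "bdd_below S"
    using prox_obj_bounded_below[OF z] unfolding S_def bdd_below_def by blast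
  define m where "m = Inf S"
  have m: "\<forall>w\<in>vecs I. \<phi> w \<noteq> \<infinity> \<longrightarrow> m \<le> prox_obj z w"
    unfolding m_def S_def using bdd unfolding S_def by (auto intro: cInf_lower)
  have "\<exists>w. w \<in> vecs I \<and> \<phi> w \<noteq> \<infinity> \<and> prox_obj z w < m + inverse (real (Suc k))" for k
  proof -
    have "Inf S < m + inverse (real (Suc k))" unfolding m_def by simp
    then show ?thesis using cInf_less_iff[OF Sne bdd] unfolding S_def by blast
  qed
  then obtain u where u: "\<And>k. u k \<in> vecs I" "\<And>k. \<phi> (u k) \<noteq> \<infinity>"
      "\<And>k. prox_obj z (u k) < m + inverse (real (Suc k))"
    by metis
  have Cauchy: "\<exists>M. \<forall>k\<ge>M. \<forall>l\<ge>M. nrm I (vsub (u k) (u l)) < e" if "0 < e" for e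
    using prox_obj_minimizing_Cauchy[OF m u that] .
  obtain p where p: "p \<in> vecs I" "(\<lambda>k. nrm I (vsub (u k) p)) \<longlonglongrightarrow> 0" "\<And>a. (\<lambda>k. u k a) \<longlonglongrightarrow> p a"
    using vecs_Cauchy_limit[OF fin u(1) Cauchy] by blast
  have lim: "(\<lambda>k. m + inverse (real (Suc k))) \<longlonglongrightarrow> m + 0"
    by (intro tendsto_add tendsto_const LIMSEQ_inverse_real_of_nat)
  have bound: "prox_obj z (u k) \<le> m + inverse (real (Suc k))" for k
    using u(3) less_imp_le by blast
  have "\<phi> p \<noteq> \<infinity> \<and> prox_obj z p \<le> m + 0"
    by (rule prox_obj_limit_le[OF u(1,2) p bound lim])
  then show ?thesis using that p(1) m by force
qed

lemma prox_obj_quadratic_growth: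
  assumes p: "p \<in> vecs I" "\<phi> p \<noteq> \<infinity>"
    and min: "\<forall>w\<in>vecs I. \<phi> w \<noteq> \<infinity> \<longrightarrow> prox_obj z p \<le> prox_obj z w"
    and w: "w \<in> vecs I" "\<phi> w \<noteq> \<infinity>"
  shows "prox_obj z p + (nrm I (vsub w p))\<^sup>2 / 2 \<le> prox_obj z w"
proof (rule ccontr)
  assume nc: "\<not> ?thesis"
  define Q where "Q = (nrm I (vsub w p))\<^sup>2"
  define \<delta> where "\<delta> = prox_obj z p + Q / 2 - prox_obj z w"
  have dp: "0 < \<delta>" using nc unfolding \<delta>_def Q_def by simp
  have "prox_obj z p \<le> prox_obj z w" using min w by blast
  then have "Q \<noteq> 0" using dp unfolding \<delta>_def by auto
  then have Qp: "0 < Q" unfolding Q_def by simp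
  define t where "t = min 1 (\<delta> / Q)"
  have t: "0 < t" "t \<le> 1" "t * Q \<le> \<delta>" using dp Qp unfolding t_def
    by (auto simp: min_def field_simps)
  note sc = prox_obj_strongly_convex[OF w p less_imp_le[OF t(1)] t(2), of z]
  have "(\<lambda>a. t * w a + (1 - t) * p a) \<in> vecs I" using w p vecs_lincomb by blast
  then have "prox_obj z p \<le> t * prox_obj z w + (1 - t) * prox_obj z p - t * (1 - t) / 2 * Q"
    using min sc unfolding Q_def by fastforce
  then have "t * prox_obj z p \<le> t * (prox_obj z w - (1 - t) / 2 * Q)" by (simp add: algebra_simps)
  then have "prox_obj z p \<le> prox_obj z w - (1 - t) / 2 * Q" using t(1) by (rule mult_left_le_imp_le)
  moreover have "(1 - t) / 2 * Q = Q / 2 - t * Q / 2" by (simp add: field_simps)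
  ultimately show False using t(3) dp unfolding \<delta>_def by linarith
qed

lemma prox_obj_ereal:
  "w \<in> vecs I \<Longrightarrow> ereal \<alpha> * \<phi> w + ereal ((nrm I (vsub z w))\<^sup>2 / 2)
     = (if \<phi> w = \<infinity> then \<infinity> else ereal (prox_obj z w))"
  unfolding prox_obj_def using \<alpha> phi_real[of w] by (cases "\<phi> w") auto

lemma prox_minimizes:
  assumes z: "z \<in> vecs I"
  defines "p \<equiv> prox I (\<lambda>w. ereal \<alpha> * \<phi> w) z"
  shows "p \<in> vecs I" "\<phi> p \<noteq> \<infinity>" "\<forall>w\<in>vecs I. \<phi> w \<noteq> \<infinity> \<longrightarrow> prox_obj z p \<le> prox_obj z w"
    "env I (\<lambda>w. ereal \<alpha> * \<phi> w) z = ereal (prox_obj z p)"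
proof -
  let ?E = "\<lambda>w. ereal \<alpha> * \<phi> w + ereal ((nrm I (vsub z w))\<^sup>2 / 2)"
  obtain q where q: "q \<in> vecs I" "\<phi> q \<noteq> \<infinity>"
    and qmin: "\<forall>w\<in>vecs I. \<phi> w \<noteq> \<infinity> \<longrightarrow> prox_obj z q \<le> prox_obj z w"
    using prox_obj_has_minimizer[OF z] by blast
  have le: "ereal (prox_obj z q) \<le> ?E w" if "w \<in> vecs I" for w
    using qmin that by (simp add: prox_obj_ereal)
  have Eq: "?E q = ereal (prox_obj z q)" using q by (simp add: prox_obj_ereal)
  have uniq: "r = q" if r: "r \<in> vecs I \<and> (\<forall>w\<in>vecs I. ?E r \<le> ?E w)" for r
  proof -
    have rq: "?E r \<le> ereal (prox_obj z q)" using r q Eq by metis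
    then have rf: "\<phi> r \<noteq> \<infinity>" using r by (auto simp: prox_obj_ereal split: if_splits)
    then have "prox_obj z r \<le> prox_obj z q" using rq r by (simp add: prox_obj_ereal)
    moreover have "prox_obj z q + (nrm I (vsub r q))\<^sup>2 / 2 \<le> prox_obj z r"
      using prox_obj_quadratic_growth[OF q qmin] r rf by blast
    ultimately have "(nrm I (vsub r q))\<^sup>2 \<le> 0" by linarith
    then have "nrm I (vsub r q) = 0" by simp
    then show ?thesis using vecs_eq_if_nrm_vsub_eq_0[OF fin] r q by blast
  qed
  have "p = q" unfolding p_def prox_def
    by (rule the_equality) (use q le Eq uniq in auto)
  moreover have "env I (\<lambda>w. ereal \<alpha> * \<phi> w) z = ereal (prox_obj z q)" unfolding env_def
    by (rule antisym) (use q(1) Eq le in \<open>auto intro: INF_lower2 INF_greatest\<close>)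
  ultimately show "p \<in> vecs I" "\<phi> p \<noteq> \<infinity>" "\<forall>w\<in>vecs I. \<phi> w \<noteq> \<infinity> \<longrightarrow> prox_obj z p \<le> prox_obj z w"
    "env I (\<lambda>w. ereal \<alpha> * \<phi> w) z = ereal (prox_obj z p)"
    using q qmin by auto
qed

lemma env_complement_convex:
  "convex_with_modulus I (vecs I) 0 (env_complement I (\<lambda>w. ereal \<alpha> * \<phi> w))"
  unfolding convex_with_modulus_def
proof (intro ballI allI impI)
  fix z1 z2 and t :: real assume z1: "z1 \<in> vecs I" and z2: "z2 \<in> vecs I" and t: "0 \<le> t \<and> t \<le> 1"
  let ?g = "\<lambda>w. ereal \<alpha> * \<phi> w"
  let ?zt = "\<lambda>a. t * z1 a + (1 - t) * z2 a"
  define pt where "pt = prox I ?g ?zt"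
  have zt: "?zt \<in> vecs I" using z1 z2 vecs_lincomb by blast
  note ct = prox_minimizes[OF zt, folded pt_def]
  note c1 = prox_minimizes[OF z1] and c2 = prox_minimizes[OF z2]
  have "t * prox_obj z1 (prox I ?g z1) \<le> t * prox_obj z1 pt"
    "(1 - t) * prox_obj z2 (prox I ?g z2) \<le> (1 - t) * prox_obj z2 pt"
    using c1(3) c2(3) ct(1,2) t by (intro mult_left_mono; simp)+
  moreover have "prox_obj ?zt pt = t * prox_obj z1 pt + (1 - t) * prox_obj z2 pt
      - t * (1 - t) * (nrm I (vsub z1 z2))\<^sup>2 / 2"
    unfolding prox_obj_def nrm_vsub_convex_comb[OF fin] by (simp add: field_simps)
  ultimately show "env_complement I ?g ?zt \<le> t * env_complement I ?g z1
      + (1 - t) * env_complement I ?g z2 - 0 / 2 * (t * (1 - t)) * (nrm I (vsub z1 z2))\<^sup>2"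
    unfolding env_complement_def ct(4) c1(4) c2(4) nrm_convex_comb[OF fin]
    by (simp add: field_simps)
qed

text \<open>The two optimality inequalities for p = prox z and p' = prox z' squeeze the first-order
  remainder of env_complement between 0 and the monotonicity term, which is at most the square
  of z' - z because prox is nonexpansive.\<close>

lemma env_complement_remainder:
  assumes z: "z \<in> vecs I" and z': "z' \<in> vecs I"
  defines "g \<equiv> \<lambda>w. ereal \<alpha> * \<phi> w"
  shows "\<bar>env_complement I g z' - env_complement I g z - ip I (prox I g z) (vsub z' z)\<bar>
    \<le> (nrm I (vsub z' z))\<^sup>2"
proof -
  define p where "p = prox I g z"
  define p' where "p' = prox I g z'"
  note c = prox_minimizes[OF z, folded g_def p_def]
  note c' = prox_minimizes[OF z', folded g_def p'_def]
  have V1: "prox_obj z p + (nrm I (vsub p' p))\<^sup>2 / 2 \<le> prox_obj z p'"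
    using prox_obj_quadratic_growth c c' by blast
  have V2: "prox_obj z' p' + (nrm I (vsub p p'))\<^sup>2 / 2 \<le> prox_obj z' p"
    using prox_obj_quadratic_growth c c' by blast
  note I1 = half_nrm_sq_diff_eq_ip[OF fin, of z' z p]
  note I2 = half_nrm_sq_diff_eq_ip[OF fin, of z' z p']
  define D where "D = env_complement I g z' - env_complement I g z - ip I p (vsub z' z)"
  have D: "D = (nrm I z')\<^sup>2 / 2 - prox_obj z' p' - ((nrm I z)\<^sup>2 / 2 - prox_obj z p) - ip I p (vsub z' z)"
    unfolding D_def env_complement_def c(4) c'(4) by simp
  have ipd: "ip I (vsub p' p) (vsub z' z) = ip I p' (vsub z' z) - ip I p (vsub z' z)"
    by (rule ip_diff_left)
  have sym: "nrm I (vsub p p') = nrm I (vsub p' p)" by (rule nrm_vsub_commute)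
  have lo: "0 \<le> D"
    using V2 I1 zero_le_power2[of "nrm I (vsub p p')"] unfolding D prox_obj_def by linarith
  have up: "D \<le> ip I (vsub p' p) (vsub z' z)"
    using V1 I2 ipd zero_le_power2[of "nrm I (vsub p' p)"] unfolding D prox_obj_def by linarith
  have mono: "(nrm I (vsub p' p))\<^sup>2 \<le> ip I (vsub p' p) (vsub z' z)"
    using V1 V2 I1 I2 ipd unfolding prox_obj_def sym by linarith
  have cs: "ip I (vsub p' p) (vsub z' z) \<le> nrm I (vsub p' p) * nrm I (vsub z' z)"
    by (rule ip_le_nrm_mult)
  have "nrm I (vsub p' p) \<le> nrm I (vsub z' z)"
    using mono cs by (smt (verit, best) mult_le_cancel_left nrm_nonneg power2_eq_square)
  then have "nrm I (vsub p' p) * nrm I (vsub z' z) \<le> (nrm I (vsub z' z))\<^sup>2"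
    by (simp add: power2_eq_square mult_right_mono)
  then show ?thesis using lo up cs unfolding D_def p_def by simp
qed

end

section \<open>Gradients\<close>

lemma ess_diff_has_grad_egrad:
  "ess_diff I h \<Longrightarrow> y \<in> rint I (edom I h) \<Longrightarrow> has_grad I (\<lambda>z. real_of_ereal (h z)) (egrad I h y) y"
  unfolding ess_diff_def egrad_def grad_def by (metis someI)

lemma has_grad_quadratic_remainder:
  assumes g: "g \<in> vecs I"
    and rem: "\<And>z. z \<in> vecs I \<Longrightarrow> \<bar>h z - h y - ip I g (vsub z y)\<bar> \<le> C * (nrm I (vsub z y))\<^sup>2"
  shows "has_grad I h g y"
  unfolding has_grad_def
proof (intro conjI g allI impI)
  fix e :: real assume e: "0 < e"
  define C' where "C' = \<bar>C\<bar> + 1"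
  have C': "0 < C'" unfolding C'_def by simp
  show "\<exists>d>0. \<forall>z\<in>vecs I. nrm I (vsub z y) < d \<longrightarrow>
      \<bar>h z - h y - ip I g (vsub z y)\<bar> \<le> e * nrm I (vsub z y)"
  proof (intro exI[of _ "e / C'"] conjI ballI impI)
    show "0 < e / C'" using e C' by simp
    fix z assume z: "z \<in> vecs I" and close: "nrm I (vsub z y) < e / C'"
    have "C \<le> C'" unfolding C'_def by simp
    then have "C * (nrm I (vsub z y))\<^sup>2 \<le> (C' * nrm I (vsub z y)) * nrm I (vsub z y)"
      unfolding power2_eq_square mult.assoc by (intro mult_right_mono) simp_all
    also have "\<dots> \<le> e * nrm I (vsub z y)"
      using close C' by (intro mult_right_mono) (auto simp: field_simps)
    finally show "\<bar>h z - h y - ip I g (vsub z y)\<bar> \<le> e * nrm I (vsub z y)"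
      using rem[OF z] by linarith
  qed
qed

lemma has_grad_add:
  assumes f: "has_grad I f g y" and f': "has_grad I f' g' y"
  shows "has_grad I (\<lambda>z. f z + f' z) (\<lambda>a. g a + g' a) y"
  unfolding has_grad_def
proof (intro conjI allI impI)
  show "(\<lambda>a. g a + g' a) \<in> vecs I"
    using f f' unfolding has_grad_def vecs_def by auto
  fix e :: real assume e: "0 < e"
  obtain d where d: "d > 0" "\<forall>z\<in>vecs I. nrm I (vsub z y) < d \<longrightarrow>
      \<bar>f z - f y - ip I g (vsub z y)\<bar> \<le> e / 2 * nrm I (vsub z y)"
    using f e unfolding has_grad_def by (meson half_gt_zero)
  obtain d' where d': "d' > 0" "\<forall>z\<in>vecs I. nrm I (vsub z y) < d' \<longrightarrow>
      \<bar>f' z - f' y - ip I g' (vsub z y)\<bar> \<le> e / 2 * nrm I (vsub z y)"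
    using f' e unfolding has_grad_def by (meson half_gt_zero)
  show "\<exists>d>0. \<forall>z\<in>vecs I. nrm I (vsub z y) < d \<longrightarrow>
      \<bar>f z + f' z - (f y + f' y) - ip I (\<lambda>a. g a + g' a) (vsub z y)\<bar> \<le> e * nrm I (vsub z y)"
  proof (intro exI[of _ "min d d'"] conjI ballI impI)
    show "0 < min d d'" using d d' by simp
    fix z assume "z \<in> vecs I" "nrm I (vsub z y) < min d d'"
    then have "\<bar>f z - f y - ip I g (vsub z y)\<bar> \<le> e / 2 * nrm I (vsub z y)"
      "\<bar>f' z - f' y - ip I g' (vsub z y)\<bar> \<le> e / 2 * nrm I (vsub z y)"
      using d(2) d'(2) by auto
    moreover have "f z + f' z - (f y + f' y) - ip I (\<lambda>a. g a + g' a) (vsub z y)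
        = (f z - f y - ip I g (vsub z y)) + (f' z - f' y - ip I g' (vsub z y))"
      unfolding ip_add_left by simp
    moreover note abs_triangle_ineq[of "f z - f y - ip I g (vsub z y)" "f' z - f' y - ip I g' (vsub z y)"]
    moreover have "e / 2 * nrm I (vsub z y) + e / 2 * nrm I (vsub z y) = e * nrm I (vsub z y)" by simp
    ultimately show "\<bar>f z + f' z - (f y + f' y) - ip I (\<lambda>a. g a + g' a) (vsub z y)\<bar>
        \<le> e * nrm I (vsub z y)"
      by linarith
  qed
qed

lemma has_grad_sum:
  assumes "finite S" and "\<And>j. j \<in> S \<Longrightarrow> has_grad I (F j) (g j) y"
  shows "has_grad I (\<lambda>z. \<Sum>j\<in>S. F j z) (\<lambda>a. \<Sum>j\<in>S. g j a) y"
  using assms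
proof (induction S rule: finite_induct)
  case empty
  show ?case by (rule has_grad_quadratic_remainder[where C = 0]) (simp_all add: zero_vecs ip_def)
next
  case (insert j S)
  then show ?case by (simp add: has_grad_add)
qed

section \<open>Block vectors\<close>

lemma blkI_Sigma: "blkI m \<kappa> b = Sigma {..<b} (\<lambda>j. {..<m (\<kappa> j)})"
  unfolding blkI_def by auto

lemma finite_blkI [simp]: "finite (blkI m \<kappa> b)"
  unfolding blkI_Sigma by auto

lemma sum_blkI: "(\<Sum>q\<in>blkI m \<kappa> b. F q) = (\<Sum>j<b. \<Sum>r<m (\<kappa> j). F (j, r))"
  unfolding blkI_Sigma by (simp add: sum.Sigma)

lemma ip_blkI: "ip (blkI m \<kappa> b) u w = (\<Sum>j<b. ip {..<m (\<kappa> j)} (blk u j) (blk w j))"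
  unfolding ip_def sum_blkI blk_def ..

lemma nrm_blkI_sq: "(nrm (blkI m \<kappa> b) u)\<^sup>2 = (\<Sum>j<b. (nrm {..<m (\<kappa> j)} (blk u j))\<^sup>2)"
  by (simp add: nrm_sq sum_blkI blk_def)

lemma nrm_blk_le: "j < b \<Longrightarrow> nrm {..<m (\<kappa> j)} (blk u j) \<le> nrm (blkI m \<kappa> b) u"
  by (rule power2_le_imp_le) (auto simp: nrm_blkI_sq intro: member_le_sum)

lemma blk_vecs: "u \<in> vecs (blkI m \<kappa> b) \<Longrightarrow> j < b \<Longrightarrow> blk u j \<in> vecs {..<m (\<kappa> j)}"
  unfolding vecs_def blk_def blkI_def by auto

lemma blk_lincomb: "blk (\<lambda>q. s * u q + t * w q) j = (\<lambda>r. s * blk u j r + t * blk w j r)"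
  unfolding blk_def by simp

lemma blk_vsub: "blk (vsub u w) j = vsub (blk u j) (blk w j)"
  unfolding blk_def vsub_def by simp

lemma convex_with_modulus_block_sum:
  assumes "\<And>j. j < b \<Longrightarrow> convex_with_modulus {..<m (\<kappa> j)} (E j) \<mu> (F j)"
  shows "convex_with_modulus (blkI m \<kappa> b) {\<xi> \<in> vecs (blkI m \<kappa> b). \<forall>j<b. blk \<xi> j \<in> E j} \<mu>
    (\<lambda>\<xi>. \<Sum>j<b. F j (blk \<xi> j))"
  unfolding convex_with_modulus_def
proof (intro ballI allI impI)
  fix \<xi>1 \<xi>2 and t :: real
  assume \<xi>1: "\<xi>1 \<in> {\<xi> \<in> vecs (blkI m \<kappa> b). \<forall>j<b. blk \<xi> j \<in> E j}"
    and \<xi>2: "\<xi>2 \<in> {\<xi> \<in> vecs (blkI m \<kappa> b). \<forall>j<b. blk \<xi> j \<in> E j}" and t: "0 \<le> t \<and> t \<le> 1"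
  have "(\<Sum>j<b. F j (blk (\<lambda>a. t * \<xi>1 a + (1 - t) * \<xi>2 a) j))
      \<le> (\<Sum>j<b. t * F j (blk \<xi>1 j) + (1 - t) * F j (blk \<xi>2 j)
           - \<mu> / 2 * (t * (1 - t)) * (nrm {..<m (\<kappa> j)} (blk (vsub \<xi>1 \<xi>2) j))\<^sup>2)"
    unfolding blk_lincomb blk_vsub using \<xi>1 \<xi>2 t
    by (intro sum_mono convex_with_modulusD[OF assms]) auto
  then show "(\<Sum>j<b. F j (blk (\<lambda>a. t * \<xi>1 a + (1 - t) * \<xi>2 a) j))
      \<le> t * (\<Sum>j<b. F j (blk \<xi>1 j)) + (1 - t) * (\<Sum>j<b. F j (blk \<xi>2 j))
        - \<mu> / 2 * (t * (1 - t)) * (nrm (blkI m \<kappa> b) (vsub \<xi>1 \<xi>2))\<^sup>2"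
    unfolding nrm_blkI_sq
    by (simp add: sum.distrib sum_subtractf sum_distrib_left)
qed

lemma has_grad_blk:
  assumes j: "j < b" and grad: "has_grad {..<m (\<kappa> j)} F g (blk \<xi> j)"
  shows "has_grad (blkI m \<kappa> b) (\<lambda>\<xi>. F (blk \<xi> j))
    (\<lambda>(i, r). if i = j \<and> r < m (\<kappa> j) then g r else 0) \<xi>"
  unfolding has_grad_def
proof (intro conjI allI impI)
  let ?G = "\<lambda>(i, r). if i = j \<and> r < m (\<kappa> j) then g r else 0"
  show "?G \<in> vecs (blkI m \<kappa> b)" using j unfolding vecs_def blkI_def by auto
  have ip_G: "ip (blkI m \<kappa> b) ?G d = ip {..<m (\<kappa> j)} g (blk d j)" for d
  proof -
    have "ip (blkI m \<kappa> b) ?G d = (\<Sum>i<b. if i = j then ip {..<m (\<kappa> j)} g (blk d j) else 0)"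
      unfolding ip_def sum_blkI blk_def by (intro sum.cong) auto
    then show ?thesis using j by simp
  qed
  fix e :: real assume "0 < e"
  then obtain \<delta> where \<delta>: "\<delta> > 0" "\<forall>z\<in>vecs {..<m (\<kappa> j)}. nrm {..<m (\<kappa> j)} (vsub z (blk \<xi> j)) < \<delta> \<longrightarrow>
      \<bar>F z - F (blk \<xi> j) - ip {..<m (\<kappa> j)} g (vsub z (blk \<xi> j))\<bar>
        \<le> e * nrm {..<m (\<kappa> j)} (vsub z (blk \<xi> j))"
    using grad unfolding has_grad_def by blast
  show "\<exists>\<delta>>0. \<forall>z\<in>vecs (blkI m \<kappa> b). nrm (blkI m \<kappa> b) (vsub z \<xi>) < \<delta> \<longrightarrow>
      \<bar>F (blk z j) - F (blk \<xi> j) - ip (blkI m \<kappa> b) ?G (vsub z \<xi>)\<bar>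
        \<le> e * nrm (blkI m \<kappa> b) (vsub z \<xi>)"
  proof (intro exI[of _ \<delta>] conjI ballI impI)
    fix z assume z: "z \<in> vecs (blkI m \<kappa> b)" and close: "nrm (blkI m \<kappa> b) (vsub z \<xi>) < \<delta>"
    have le: "nrm {..<m (\<kappa> j)} (blk (vsub z \<xi>) j) \<le> nrm (blkI m \<kappa> b) (vsub z \<xi>)"
      by (rule nrm_blk_le[OF j])
    then have "\<bar>F (blk z j) - F (blk \<xi> j) - ip {..<m (\<kappa> j)} g (blk (vsub z \<xi>) j)\<bar>
        \<le> e * nrm {..<m (\<kappa> j)} (blk (vsub z \<xi>) j)"
      using \<delta>(2) blk_vecs[OF z j] close unfolding blk_vsub by auto
    also have "\<dots> \<le> e * nrm (blkI m \<kappa> b) (vsub z \<xi>)"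
      using le \<open>0 < e\<close> by (intro mult_left_mono) auto
    finally show "\<bar>F (blk z j) - F (blk \<xi> j) - ip (blkI m \<kappa> b) ?G (vsub z \<xi>)\<bar>
        \<le> e * nrm (blkI m \<kappa> b) (vsub z \<xi>)"
      unfolding ip_G .
  qed (use \<delta> in simp)
qed

lemma has_grad_block_sum:
  assumes "\<And>j. j < b \<Longrightarrow> has_grad {..<m (\<kappa> j)} (F j) (g j) (blk \<xi> j)"
  shows "has_grad (blkI m \<kappa> b) (\<lambda>\<xi>. \<Sum>j<b. F j (blk \<xi> j))
    (\<lambda>(j, r). if j < b \<and> r < m (\<kappa> j) then g j r else 0) \<xi>"
proof -
  have "has_grad (blkI m \<kappa> b) (\<lambda>\<xi>. \<Sum>j<b. F j (blk \<xi> j))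
      (\<lambda>a. \<Sum>j<b. case a of (i, r) \<Rightarrow> if i = j \<and> r < m (\<kappa> j) then g j r else 0) \<xi>"
    using assms by (intro has_grad_sum has_grad_blk) auto
  moreover have "(\<lambda>a. \<Sum>j<b. case a of (i, r) \<Rightarrow> if i = j \<and> r < m (\<kappa> j) then g j r else 0)
      = (\<lambda>(j, r). if j < b \<and> r < m (\<kappa> j) then g j r else 0)"
  proof (intro ext, clarify)
    fix i r
    have "(\<Sum>j<b. if i = j \<and> r < m (\<kappa> j) then g j r else 0)
        = (\<Sum>j<b. if j = i then (if r < m (\<kappa> i) then g i r else 0) else 0)"
      by (intro sum.cong) auto
    then show "(\<Sum>j<b. if i = j \<and> r < m (\<kappa> j) then g j r else 0)
        = (if i < b \<and> r < m (\<kappa> i) then g i r else 0)"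
      by simp
  qed
  ultimately show ?thesis by simp
qed

section \<open>The function U\<close>

lemma ASt_lincomb:
  "ASt n m A \<kappa> b (\<lambda>q. s * u q + t * w q) c = s * ASt n m A \<kappa> b u c + t * ASt n m A \<kappa> b w c"
proof (cases "c < n")
  case True
  have "(\<Sum>j<b. \<Sum>r<m (\<kappa> j). A (\<kappa> j) r c * (s * u (j, r) + t * w (j, r)))
     = s * (\<Sum>j<b. \<Sum>r<m (\<kappa> j). A (\<kappa> j) r c * u (j, r))
       + t * (\<Sum>j<b. \<Sum>r<m (\<kappa> j). A (\<kappa> j) r c * w (j, r))"
    by (simp add: sum.distrib sum_distrib_left algebra_simps)
  then show ?thesis using True unfolding ASt_def by (simp add: algebra_simps)
qed (simp add: ASt_def)

lemma zS_convex_comb: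
  "zS n m A \<kappa> b \<alpha> x v (\<lambda>q. t * u q + (1 - t) * w q)
    = (\<lambda>c. t * zS n m A \<kappa> b \<alpha> x v u c + (1 - t) * zS n m A \<kappa> b \<alpha> x v w c)"
  unfolding zS_def ASt_lincomb by (auto simp: algebra_simps)

lemma zS_vsub:
  "vsub (zS n m A \<kappa> b \<alpha> x v u) (zS n m A \<kappa> b \<alpha> x v w) = (\<lambda>c. (- \<alpha>) * ASt n m A \<kappa> b (vsub u w) c)"
proof -
  have "vsub u w = (\<lambda>q. 1 * u q + (-1) * w q)" unfolding vsub_def by auto
  then have "ASt n m A \<kappa> b (vsub u w) c = 1 * ASt n m A \<kappa> b u c + (-1) * ASt n m A \<kappa> b w c" for c
    by (simp only: ASt_lincomb)
  then have ASt_vsub: "ASt n m A \<kappa> b (vsub u w) c = ASt n m A \<kappa> b u c - ASt n m A \<kappa> b w c" for c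
    by simp
  show ?thesis unfolding ASt_vsub unfolding zS_def vsub_def by (auto simp: algebra_simps)
qed

lemma zS_vecs: "x \<in> vecs {..<n} \<Longrightarrow> v \<in> vecs {..<n} \<Longrightarrow> zS n m A \<kappa> b \<alpha> x v u \<in> vecs {..<n}"
  unfolding vecs_def zS_def ASt_def by auto

lemma abs_ASt_le:
  "\<bar>ASt n m A \<kappa> b d c\<bar> \<le> (\<Sum>j<b. \<Sum>r<m (\<kappa> j). \<bar>A (\<kappa> j) r c\<bar>) * nrm (blkI m \<kappa> b) d"
proof (cases "c < n")
  case True
  let ?N = "nrm (blkI m \<kappa> b) d"
  have "\<bar>\<Sum>j<b. \<Sum>r<m (\<kappa> j). A (\<kappa> j) r c * d (j, r)\<bar> \<le> (\<Sum>j<b. \<Sum>r<m (\<kappa> j). \<bar>A (\<kappa> j) r c * d (j, r)\<bar>)"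
    by (rule order_trans[OF sum_abs]) (intro sum_mono sum_abs)
  also have "\<dots> \<le> (\<Sum>j<b. \<Sum>r<m (\<kappa> j). \<bar>A (\<kappa> j) r c\<bar> * ?N)"
  proof (intro sum_mono)
    fix j r assume "j \<in> {..<b}" "r \<in> {..<m (\<kappa> j)}"
    then have "\<bar>d (j, r)\<bar> \<le> ?N" by (intro abs_le_nrm finite_blkI) (auto simp: blkI_def)
    then show "\<bar>A (\<kappa> j) r c * d (j, r)\<bar> \<le> \<bar>A (\<kappa> j) r c\<bar> * ?N" by (simp add: abs_mult mult_left_mono)
  qed
  also have "\<dots> = (\<Sum>j<b. \<Sum>r<m (\<kappa> j). \<bar>A (\<kappa> j) r c\<bar>) * ?N" by (simp add: sum_distrib_right)
  finally have S: "\<bar>\<Sum>j<b. \<Sum>r<m (\<kappa> j). A (\<kappa> j) r c * d (j, r)\<bar>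
      \<le> (\<Sum>j<b. \<Sum>r<m (\<kappa> j). \<bar>A (\<kappa> j) r c\<bar>) * ?N" .
  have "\<bar>1 / real b\<bar> \<le> 1" by (cases b) auto
  then have "\<bar>1 / real b\<bar> * \<bar>\<Sum>j<b. \<Sum>r<m (\<kappa> j). A (\<kappa> j) r c * d (j, r)\<bar>
      \<le> 1 * ((\<Sum>j<b. \<Sum>r<m (\<kappa> j). \<bar>A (\<kappa> j) r c\<bar>) * ?N)"
    using S by (intro mult_mono) auto
  then show ?thesis using True unfolding ASt_def by (simp add: abs_mult)
qed (simp add: ASt_def sum_nonneg)

lemma nrm_ASt_le:
  "nrm {..<n} (ASt n m A \<kappa> b d)
    \<le> (\<Sum>c<n. \<Sum>j<b. \<Sum>r<m (\<kappa> j). \<bar>A (\<kappa> j) r c\<bar>) * nrm (blkI m \<kappa> b) d"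
proof -
  have "nrm {..<n} (ASt n m A \<kappa> b d) \<le> (\<Sum>c<n. \<bar>ASt n m A \<kappa> b d c\<bar>)"
    unfolding nrm_def by (rule L2_set_le_sum_abs)
  also have "\<dots> \<le> (\<Sum>c<n. (\<Sum>j<b. \<Sum>r<m (\<kappa> j). \<bar>A (\<kappa> j) r c\<bar>) * nrm (blkI m \<kappa> b) d)"
    by (intro sum_mono abs_ASt_le)
  finally show ?thesis by (simp add: sum_distrib_right)
qed

lemma ip_ASt:
  "ip {..<n} p (ASt n m A \<kappa> b d)
     = 1 / real b * (\<Sum>j<b. \<Sum>r<m (\<kappa> j). matv (m (\<kappa> j)) n (A (\<kappa> j)) p r * d (j, r))"
proof -
  have "ip {..<n} p (ASt n m A \<kappa> b d)
      = 1 / real b * (\<Sum>c<n. \<Sum>j<b. \<Sum>r<m (\<kappa> j). p c * A (\<kappa> j) r c * d (j, r))"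
    unfolding ip_def ASt_def by (simp add: sum_distrib_left algebra_simps)
  also have "(\<Sum>c<n. \<Sum>j<b. \<Sum>r<m (\<kappa> j). p c * A (\<kappa> j) r c * d (j, r))
      = (\<Sum>j<b. \<Sum>r<m (\<kappa> j). \<Sum>c<n. p c * A (\<kappa> j) r c * d (j, r))"
    by (subst sum.swap) (intro sum.cong refl sum.swap)
  also have "\<dots> = (\<Sum>j<b. \<Sum>r<m (\<kappa> j). matv (m (\<kappa> j)) n (A (\<kappa> j)) p r * d (j, r))"
    unfolding matv_def by (intro sum.cong refl) (auto simp: sum_distrib_left sum_distrib_right mult_ac)
  finally show ?thesis .
qed

lemma US_eq:
  "US n m A f \<gamma> \<phi> \<kappa> b \<alpha> x v = (\<lambda>\<xi>. (\<Sum>j<b. real_of_ereal (fstar m \<gamma> f (\<kappa> j) (blk \<xi> j)))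
     + real b / \<alpha> * env_complement {..<n} (\<lambda>w. ereal \<alpha> * \<phi> w) (zS n m A \<kappa> b \<alpha> x v \<xi>))"
  unfolding US_def env_complement_def by (simp add: algebra_simps)

lemma US_strongly_convex:
  assumes smooth: "\<And>j. j < b \<Longrightarrow> lsmooth {..<m (\<kappa> j)} (L (\<kappa> j)) (f (\<kappa> j))"
    and curv: "\<And>j. j < b \<Longrightarrow> 0 < L (\<kappa> j) + \<gamma> (\<kappa> j)"
    and \<mu>: "\<And>j. j < b \<Longrightarrow> \<mu> \<le> 1 / (L (\<kappa> j) + \<gamma> (\<kappa> j))"
    and phi: "proper_closed_convex {..<n} \<phi>" and \<alpha>: "0 < \<alpha>"
    and x: "x \<in> vecs {..<n}" and v: "v \<in> vecs {..<n}"
  shows "strongly_convex_on (blkI m \<kappa> b)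
      {\<xi> \<in> vecs (blkI m \<kappa> b). \<forall>j<b. blk \<xi> j \<in> edom {..<m (\<kappa> j)} (fstar m \<gamma> f (\<kappa> j))}
      \<mu> (US n m A f \<gamma> \<phi> \<kappa> b \<alpha> x v)"
proof -
  let ?E = "{\<xi> \<in> vecs (blkI m \<kappa> b). \<forall>j<b. blk \<xi> j \<in> edom {..<m (\<kappa> j)} (fstar m \<gamma> f (\<kappa> j))}"
  have "convex_with_modulus {..<m (\<kappa> j)} (edom {..<m (\<kappa> j)} (fstar m \<gamma> f (\<kappa> j))) \<mu>
      (\<lambda>u. real_of_ereal (fstar m \<gamma> f (\<kappa> j) u))" if j: "j < b" for j
  proof (rule convex_with_modulus_mono[OF _ \<mu>[OF j]])
    show "convex_with_modulus {..<m (\<kappa> j)} (edom {..<m (\<kappa> j)} (fstar m \<gamma> f (\<kappa> j)))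
        (1 / (L (\<kappa> j) + \<gamma> (\<kappa> j))) (\<lambda>u. real_of_ereal (fstar m \<gamma> f (\<kappa> j) u))"
      unfolding fstar_def
      by (rule conj_convex_with_modulus[OF _ curv[OF j]])
        (use fhat_descent[OF _ smooth[OF j]] in blast)+
  qed
  then have blocks: "convex_with_modulus (blkI m \<kappa> b) ?E \<mu>
      (\<lambda>\<xi>. \<Sum>j<b. real_of_ereal (fstar m \<gamma> f (\<kappa> j) (blk \<xi> j)))"
    by (rule convex_with_modulus_block_sum)
  have "convex_with_modulus (blkI m \<kappa> b) ?E 0
      (\<lambda>\<xi>. env_complement {..<n} (\<lambda>w. ereal \<alpha> * \<phi> w) (zS n m A \<kappa> b \<alpha> x v \<xi>))"
    by (rule convex_with_modulus_affine_comp[OF env_complement_convex[OF _ phi \<alpha>]])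
      (simp_all add: zS_vecs[OF x v] zS_convex_comb)
  then have "convex_with_modulus (blkI m \<kappa> b) ?E (\<mu> + real b / \<alpha> * 0)
      (US n m A f \<gamma> \<phi> \<kappa> b \<alpha> x v)"
    unfolding US_eq using \<alpha> by (intro convex_with_modulus_add[OF blocks] convex_with_modulus_scale) auto
  then show ?thesis by (intro strongly_convex_onI) simp_all
qed

lemma env_complement_zS_has_grad:
  fixes \<xi> :: "nat \<times> nat \<Rightarrow> real" and A :: "nat \<Rightarrow> nat \<Rightarrow> nat \<Rightarrow> real"
    and m \<kappa> :: "nat \<Rightarrow> nat" and b :: nat
  assumes phi: "proper_closed_convex {..<n} \<phi>" and \<alpha>: "0 < \<alpha>"
    and x: "x \<in> vecs {..<n}" and v: "v \<in> vecs {..<n}"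
  defines "p \<equiv> prox {..<n} (\<lambda>w. ereal \<alpha> * \<phi> w) (zS n m A \<kappa> b \<alpha> x v \<xi>)"
  shows "has_grad (blkI m \<kappa> b)
      (\<lambda>\<xi>. real b / \<alpha> * env_complement {..<n} (\<lambda>w. ereal \<alpha> * \<phi> w) (zS n m A \<kappa> b \<alpha> x v \<xi>))
      (\<lambda>(j, r). if j < b \<and> r < m (\<kappa> j) then - matv (m (\<kappa> j)) n (A (\<kappa> j)) p r else 0) \<xi>"
proof (rule has_grad_quadratic_remainder)
  let ?G = "env_complement {..<n} (\<lambda>w. ereal \<alpha> * \<phi> w)"
  let ?z = "zS n m A \<kappa> b \<alpha> x v"
  let ?g = "\<lambda>(j, r). if j < b \<and> r < m (\<kappa> j) then - matv (m (\<kappa> j)) n (A (\<kappa> j)) p r else 0"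
  define K0 where "K0 = (\<Sum>c<n. \<Sum>j<b. \<Sum>r<m (\<kappa> j). \<bar>A (\<kappa> j) r c\<bar>)"
  show "?g \<in> vecs (blkI m \<kappa> b)" unfolding vecs_def blkI_def by auto
  fix \<xi>' assume \<xi>': "\<xi>' \<in> vecs (blkI m \<kappa> b)"
  let ?N = "nrm (blkI m \<kappa> b) (vsub \<xi>' \<xi>)"
  have ip_g: "ip (blkI m \<kappa> b) ?g (vsub \<xi>' \<xi>) = real b / \<alpha> * ip {..<n} p (vsub (?z \<xi>') (?z \<xi>))"
    using \<alpha> unfolding zS_vsub ip_scale_right ip_ASt
    by (simp add: ip_def sum_blkI sum_negf)
  have "\<bar>?G (?z \<xi>') - ?G (?z \<xi>) - ip {..<n} p (vsub (?z \<xi>') (?z \<xi>))\<bar> \<le> (nrm {..<n} (vsub (?z \<xi>') (?z \<xi>)))\<^sup>2"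
    unfolding p_def by (rule env_complement_remainder[OF _ phi \<alpha>]) (simp_all add: zS_vecs[OF x v])
  also have "nrm {..<n} (vsub (?z \<xi>') (?z \<xi>)) = \<alpha> * nrm {..<n} (ASt n m A \<kappa> b (vsub \<xi>' \<xi>))"
    unfolding zS_vsub nrm_scale using \<alpha> by simp
  also have "(\<alpha> * nrm {..<n} (ASt n m A \<kappa> b (vsub \<xi>' \<xi>)))\<^sup>2 \<le> (\<alpha> * K0 * ?N)\<^sup>2"
    using \<alpha> nrm_ASt_le unfolding K0_def by (intro power_mono) (auto simp: mult.assoc)
  finally have le: "real b / \<alpha> * \<bar>?G (?z \<xi>') - ?G (?z \<xi>) - ip {..<n} p (vsub (?z \<xi>') (?z \<xi>))\<bar>
      \<le> real b / \<alpha> * (\<alpha> * K0 * ?N)\<^sup>2"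
    using \<alpha> by (intro mult_left_mono) auto
  have "\<bar>real b / \<alpha> * ?G (?z \<xi>') - real b / \<alpha> * ?G (?z \<xi>) - ip (blkI m \<kappa> b) ?g (vsub \<xi>' \<xi>)\<bar>
      = real b / \<alpha> * \<bar>?G (?z \<xi>') - ?G (?z \<xi>) - ip {..<n} p (vsub (?z \<xi>') (?z \<xi>))\<bar>"
    unfolding ip_g right_diff_distrib[symmetric] abs_mult using \<alpha> by simp
  also note le
  also have "real b / \<alpha> * (\<alpha> * K0 * ?N)\<^sup>2 = real b / \<alpha> * (\<alpha> * K0)\<^sup>2 * ?N\<^sup>2"
    by (simp add: power_mult_distrib)
  finally show "\<bar>real b / \<alpha> * ?G (?z \<xi>') - real b / \<alpha> * ?G (?z \<xi>) - ip (blkI m \<kappa> b) ?g (vsub \<xi>' \<xi>)\<bar>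
      \<le> real b / \<alpha> * (\<alpha> * K0)\<^sup>2 * ?N\<^sup>2" .
qed

lemma US_has_grad:
  assumes ess: "\<And>j. j < b \<Longrightarrow> ess_diff {..<m (\<kappa> j)} (fstar m \<gamma> f (\<kappa> j))"
    and \<xi>: "\<And>j. j < b \<Longrightarrow> blk \<xi> j \<in> rint {..<m (\<kappa> j)} (edom {..<m (\<kappa> j)} (fstar m \<gamma> f (\<kappa> j)))"
    and phi: "proper_closed_convex {..<n} \<phi>" and \<alpha>: "0 < \<alpha>"
    and x: "x \<in> vecs {..<n}" and v: "v \<in> vecs {..<n}"
  shows "has_grad (blkI m \<kappa> b) (US n m A f \<gamma> \<phi> \<kappa> b \<alpha> x v) (VS n m A f \<gamma> \<phi> \<kappa> b \<alpha> x v \<xi>) \<xi>"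
proof -
  have "has_grad (blkI m \<kappa> b)
      (\<lambda>\<xi>. \<Sum>j<b. real_of_ereal (fstar m \<gamma> f (\<kappa> j) (blk \<xi> j)))
      (\<lambda>(j, r). if j < b \<and> r < m (\<kappa> j) then egrad {..<m (\<kappa> j)} (fstar m \<gamma> f (\<kappa> j)) (blk \<xi> j) r else 0) \<xi>"
    by (intro has_grad_block_sum ess_diff_has_grad_egrad ess \<xi>)
  note sum_rule = has_grad_add[OF this env_complement_zS_has_grad[OF phi \<alpha> x v]]
  have "VS n m A f \<gamma> \<phi> \<kappa> b \<alpha> x v \<xi> = (\<lambda>a.
      (case a of (j, r) \<Rightarrow> if j < b \<and> r < m (\<kappa> j)
         then egrad {..<m (\<kappa> j)} (fstar m \<gamma> f (\<kappa> j)) (blk \<xi> j) r else 0)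
    + (case a of (j, r) \<Rightarrow> if j < b \<and> r < m (\<kappa> j)
         then - matv (m (\<kappa> j)) n (A (\<kappa> j)) (prox {..<n} (\<lambda>w. ereal \<alpha> * \<phi> w) (zS n m A \<kappa> b \<alpha> x v \<xi>)) r
         else 0))"
    unfolding VS_def by (auto simp: fun_eq_iff)
  then show ?thesis unfolding US_eq by (simp only: sum_rule)
qed

theorem proposition4p3:
  fixes N n b :: nat
    and m :: "nat \<Rightarrow> nat"
    and A :: "nat \<Rightarrow> nat \<Rightarrow> nat \<Rightarrow> real"
    and f :: "nat \<Rightarrow> (nat \<Rightarrow> real) \<Rightarrow> real"
    and L \<gamma> :: "nat \<Rightarrow> real"
    and \<phi> :: "(nat \<Rightarrow> real) \<Rightarrow> ereal"
    and \<alpha> :: real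
    and x v :: "nat \<Rightarrow> real"
    and \<kappa> :: "nat \<Rightarrow> nat"
  assumes N_pos: "0 < N"
    and A1: "\<forall>i<N. 0 < L i \<and> lsmooth {..<m i} (L i) (f i) \<and> weakly_convex {..<m i} (\<gamma> i) (f i)"
    and A4: "\<forall>i<N. ess_diff {..<m i} (fstar m \<gamma> f i) \<and>
               loc_lip_grad {..<m i} (fstar m \<gamma> f i) (rint {..<m i} (edom {..<m i} (fstar m \<gamma> f i)))"
    and phi: "proper_closed_convex {..<n} \<phi>"
    and alpha: "0 < \<alpha>"
    and x: "x \<in> vecs {..<n}" and v: "v \<in> vecs {..<n}"
    and kappa: "\<forall>j<b. \<kappa> j < N"
  shows "strongly_convex_on (blkI m \<kappa> b)
           {\<xi> \<in> vecs (blkI m \<kappa> b). \<forall>j<b. blk \<xi> j \<in> edom {..<m (\<kappa> j)} (fstar m \<gamma> f (\<kappa> j))}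
           (Min ((\<lambda>i. 1 / (L i + \<gamma> i)) ` {..<N}))
           (US n m A f \<gamma> \<phi> \<kappa> b \<alpha> x v)
       \<and> (\<forall>\<xi> \<in> {\<xi> \<in> vecs (blkI m \<kappa> b). \<forall>j<b.
              blk \<xi> j \<in> rint {..<m (\<kappa> j)} (edom {..<m (\<kappa> j)} (fstar m \<gamma> f (\<kappa> j)))}.
            has_grad (blkI m \<kappa> b) (US n m A f \<gamma> \<phi> \<kappa> b \<alpha> x v) (VS n m A f \<gamma> \<phi> \<kappa> b \<alpha> x v \<xi>) \<xi>)"
proof (intro conjI ballI)
  have "0 < L (\<kappa> j) + \<gamma> (\<kappa> j)" if "j < b" for j
    using A1 kappa that unfolding weakly_convex_def by (auto intro: add_pos_nonneg)
  moreover have "Min ((\<lambda>i. 1 / (L i + \<gamma> i)) ` {..<N}) \<le> 1 / (L (\<kappa> j) + \<gamma> (\<kappa> j))" if "j < b" for j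
    using kappa that by (intro Min_le) auto
  ultimately show "strongly_convex_on (blkI m \<kappa> b)
      {\<xi> \<in> vecs (blkI m \<kappa> b). \<forall>j<b. blk \<xi> j \<in> edom {..<m (\<kappa> j)} (fstar m \<gamma> f (\<kappa> j))}
      (Min ((\<lambda>i. 1 / (L i + \<gamma> i)) ` {..<N})) (US n m A f \<gamma> \<phi> \<kappa> b \<alpha> x v)"
    using A1 kappa by (intro US_strongly_convex phi alpha x v) auto
next
  fix \<xi> assume "\<xi> \<in> {\<xi> \<in> vecs (blkI m \<kappa> b). \<forall>j<b.
      blk \<xi> j \<in> rint {..<m (\<kappa> j)} (edom {..<m (\<kappa> j)} (fstar m \<gamma> f (\<kappa> j)))}"
  then show "has_grad (blkI m \<kappa> b) (US n m A f \<gamma> \<phi> \<kappa> b \<alpha> x v) (VS n m A f \<gamma> \<phi> \<kappa> b \<alpha> x v \<xi>) \<xi>"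
    using A4 kappa by (intro US_has_grad phi alpha x v) auto
qed

end
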